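(* Let $\mu,\nu\in\mathcal M^+_b(\Omega)$ with $\mu\perp\nu$, and let $E:=\{x\in\Omega: G\mu(x)=G\nu(x)=+\infty\}$. Then $$\lim_{r\to0^+}\frac{\frac{1}{\mathrm{meas}(B_r(x))}\int_{B_r(x)}G\nu\,dy}{\frac{1}{\mathrm{meas}(B_r(x))}\int_{B_r(x)}G\mu\,dy}=0\qquad\text{for }\mu\text{-a.e. }x\in E.$$
   Context: $\Omega\subset\mathbb R^N$, $N\ge2$, is a bounded open set; $B_r(x)$ is the open ball of centre $x$ and radius $r$. $G$ is the fundamental solution of $-\Delta$: $G(|x|)=\frac{1}{(N-2)\sigma_{N-1}}|x|^{2-N}$ if $N>2$, and $G(|x|)=\frac1{2\pi}\log\frac1{|x|}$ if $N=2$, where $\sigma_{N-1}$ is the $(N-1)$-dimensional measure of the unit sphere. For $\mu\in\mathcal M^+_b(\Omega)$ (non-negative bounded Radon measures on $\Omega$), $G\mu(x)=\int_\Omega G(|x-y|)\,d\mu(y)$ for $x\in\mathbb R^N$. *)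

theory Defs
  imports "HOL-Analysis.Analysis"
begin

text \<open>(N-1)-dimensional measure of the unit sphere in R^N: sigma_{N-1} = N * |B_1|.\<close>
definition sphere_area :: "'a::euclidean_space itself \<Rightarrow> real" where
  "sphere_area T = real DIM('a) * measure lborel (ball (0::'a) 1)"

text \<open>Fundamental solution G(|x-y|) of -Laplace, with value +infinity on the diagonal.\<close>
definition Gfund :: "'a::euclidean_space \<Rightarrow> 'a \<Rightarrow> ereal" where
  "Gfund x y = (let r = norm (x - y) in
     if r = 0 then \<infinity>
     else if DIM('a) = 2 then ereal (ln (1 / r) / (2 * pi))
     else ereal (r powr (2 - real DIM('a)) / ((real DIM('a) - 2) * sphere_area TYPE('a))))"

definition Gpot :: "'a::euclidean_space measure \<Rightarrow> 'a \<Rightarrow> ereal" where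
  "Gpot \<mu> x = enn2ereal (\<integral>\<^sup>+ y. e2ennreal (Gfund x y) \<partial>\<mu>)
              - enn2ereal (\<integral>\<^sup>+ y. e2ennreal (- Gfund x y) \<partial>\<mu>)"

definition ball_avg :: "('a::euclidean_space \<Rightarrow> ereal) \<Rightarrow> 'a \<Rightarrow> real \<Rightarrow> real" where
  "ball_avg f x r = (1 / measure lborel (ball x r)) *
                    (\<integral> y \<in> ball x r. real_of_ereal (f y) \<partial>lborel)"

end

theory Submission
  imports Defs
begin

text \<open>Let \<open>K\<close> be the positive part of the fundamental solution as a function of the radius.
  Averaging over \<open>B_r(x)\<close> freezes the kernel at scale \<open>r\<close>: up to additive constants (the negative
  part of \<open>G\<close> is bounded on the bounded set \<open>\<Omega>\<close>), the average of \<open>G\<mu>\<close> lies between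
  \<open>\<integral> K(2 max(|x - z|, r)) d\<mu>(z)\<close> and \<open>6^N \<integral> K(max(|x - z|, r)/2) d\<mu>(z)\<close>, and such truncated
  potentials with different scalings of the distance are comparable.  Where \<open>G\<mu>(x) = \<infinity>\<close> they
  tend to \<open>\<infinity>\<close> as \<open>r \<rightarrow> 0\<close>, by monotone convergence.  Since \<open>\<mu> \<bottom> \<nu>\<close>, Vitali's covering lemma
  gives, for \<open>\<mu>\<close>-a.e. \<open>x\<close> and every \<open>\<epsilon> > 0\<close>, \<open>\<nu>(B_\<rho>(x)) \<le> \<epsilon> \<mu>(B_5\<rho>(x))\<close> for all small \<open>\<rho>\<close>;
  as the kernel is radially decreasing, the layer-cake formula turns this into a bound of the
  truncated \<open>\<nu>\<close>-potential near \<open>x\<close> by \<open>\<epsilon>\<close> times a truncated \<open>\<mu>\<close>-potential.  So the numerator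
  is eventually at most \<open>\<epsilon>\<close> times the denominator plus a constant, while the denominator tends
  to \<open>\<infinity>\<close>.\<close>


section \<open>The radial kernel\<close>

definition green_radial :: "'a::euclidean_space itself \<Rightarrow> real \<Rightarrow> real" where
  "green_radial T s =
     (if DIM('a) = 2 then max (ln (1 / s)) 0 / (2 * pi)
      else s powr (2 - real DIM('a)) / ((real DIM('a) - 2) * sphere_area T))"

definition green_gap :: real where
  "green_gap = ln 2 / (2 * pi)"

lemma green_gap_pos: "green_gap > 0"
  unfolding green_gap_def by simp

lemma sphere_area_pos: "sphere_area TYPE('a::euclidean_space) > 0"
  unfolding sphere_area_def using content_ball_pos[of 1 "0::'a"] by simp

lemma green_radial_nonneg:
  assumes "DIM('a::euclidean_space) \<ge> 2"
  shows "green_radial TYPE('a) s \<ge> 0"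
  using assms sphere_area_pos[where 'a='a]
  unfolding green_radial_def by (auto intro!: divide_nonneg_pos)

lemma green_radial_antimono:
  assumes "DIM('a::euclidean_space) \<ge> 2" "0 < s" "s \<le> t"
  shows "green_radial TYPE('a) t \<le> green_radial TYPE('a) s"
proof (cases "DIM('a) = 2")
  case True
  have "ln (1 / t) \<le> ln (1 / s)" using assms by (simp add: ln_div)
  then show ?thesis using True unfolding green_radial_def by (auto intro!: divide_right_mono)
next
  case False
  then have N: "real DIM('a) > 2" using assms by simp
  have "t powr (2 - real DIM('a)) \<le> s powr (2 - real DIM('a))"
    using assms N by (intro powr_mono2') auto
  then show ?thesis
    using False N sphere_area_pos[where 'a='a] unfolding green_radial_def
    by (auto intro!: divide_right_mono)
qed

lemma continuous_on_green_radial: "continuous_on {0<..} (green_radial TYPE('a::euclidean_space))"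
  using sphere_area_pos[where 'a='a] unfolding green_radial_def
  by (cases "DIM('a) = 2") (auto intro!: continuous_intros)

lemma green_radial_measurable [measurable]:
  "green_radial TYPE('a::euclidean_space) \<in> borel_measurable borel"
  unfolding green_radial_def by measurable

text \<open>In the plane, halving the radius adds \<open>green_gap\<close> to the kernel; the factor
  \<open>2^(n(N-1))\<close> instead of \<open>2^(n(N-2))\<close> absorbs these \<open>n\<close> additive losses.\<close>
lemma green_radial_divide_pow2:
  assumes N: "DIM('a::euclidean_space) \<ge> 2" and s: "0 < s"
  shows "green_radial TYPE('a) (s / 2^n) \<le> 2^(n * (DIM('a) - 1)) * (green_radial TYPE('a) s + green_gap)"
proof (cases "DIM('a) = 2")
  case True
  have "ln (1 / (s / 2^n)) = real n * ln 2 + ln (1 / s)"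
    using s by (simp add: ln_div ln_realpow)
  then have "green_radial TYPE('a) (s / 2^n) \<le> real n * green_gap + green_radial TYPE('a) s"
    using True unfolding green_radial_def green_gap_def by (auto simp: field_simps max_def)
  also have "\<dots> \<le> 2^n * green_gap + 2^n * green_radial TYPE('a) s"
    using green_gap_pos green_radial_nonneg[OF N, of s]
    by (intro add_mono mult_right_mono) (auto simp: mult_le_cancel_right1 less_imp_le)
  finally show ?thesis using True by (simp add: algebra_simps)
next
  case False
  then have N': "real DIM('a) > 2" using N by simp
  have "(s / 2^n) powr (2 - real DIM('a)) = s powr (2 - real DIM('a)) / (2^n) powr (2 - real DIM('a))"
    using s by (simp add: powr_divide)
  also have "(2^n :: real) powr (2 - real DIM('a)) = inverse (2^(n * (DIM('a) - 2)))"
    using N' by (simp add: powr_realpow[symmetric] powr_powr powr_minus[symmetric] of_nat_diff algebra_simps)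
  finally have "(s / 2^n) powr (2 - real DIM('a)) = 2^(n * (DIM('a) - 2)) * s powr (2 - real DIM('a))"
    by (simp add: divide_inverse)
  then have "green_radial TYPE('a) (s / 2^n) = 2^(n * (DIM('a) - 2)) * green_radial TYPE('a) s"
    using False unfolding green_radial_def by simp
  also have "\<dots> \<le> 2^(n * (DIM('a) - 1)) * (green_radial TYPE('a) s + green_gap)"
    using green_radial_nonneg[OF N, of s] green_gap_pos N
    by (intro mult_mono power_increasing) auto
  finally show ?thesis .
qed

lemma green_radial_unbounded:
  assumes N: "DIM('a::euclidean_space) \<ge> 2"
  shows "\<exists>n. C \<le> green_radial TYPE('a) (1 / Suc n)"
proof (cases "DIM('a) = 2")
  case True
  obtain n :: nat where "exp (2 * pi * C) \<le> real n" using real_arch_simple by blast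
  then have "exp (2 * pi * C) \<le> real (Suc n)" by simp
  then have "2 * pi * C \<le> ln (real (Suc n))"
    by (metis exp_gt_zero exp_le_cancel_iff exp_ln of_nat_0_less_iff zero_less_Suc)
  then have "C \<le> max (ln (1 / (1 / real (Suc n)))) 0 / (2 * pi)"
    by (simp add: field_simps mult.commute)
  then show ?thesis using True unfolding green_radial_def by auto
next
  case False
  let ?d = "(real DIM('a) - 2) * sphere_area TYPE('a)"
  have d: "?d > 0" using N False sphere_area_pos[where 'a='a] by simp
  obtain n :: nat where "C * ?d \<le> real n" using real_arch_simple by blast
  then have "C * ?d \<le> real (Suc n) powr 1" by simp
  also have "\<dots> \<le> real (Suc n) powr (real DIM('a) - 2)" using N False by (intro powr_mono) auto
  also have "\<dots> = (1 / real (Suc n)) powr (2 - real DIM('a))"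
    by (simp add: powr_divide powr_minus_divide[symmetric] powr_minus)
  finally have "C \<le> (1 / real (Suc n)) powr (2 - real DIM('a)) / ?d" using d by (simp add: field_simps)
  then show ?thesis using False unfolding green_radial_def by auto
qed

lemma e2ennreal_Gfund:
  "e2ennreal (Gfund y (z::'a)) =
     (if y = z then \<infinity> else ennreal (green_radial TYPE('a::euclidean_space) (norm (y - z))))"
proof (cases "y = z")
  case True then show ?thesis by (simp add: Gfund_def)
next
  case False
  have "ennreal (ln (1 / norm (y - z)) / (2 * pi)) = ennreal (max (ln (1 / norm (y - z))) 0 / (2 * pi))"
    by (cases "ln (1 / norm (y - z)) \<ge> 0") (auto simp: max_def ennreal_neg divide_nonpos_pos)
  then show ?thesis using False by (simp add: Gfund_def green_radial_def Let_def)
qed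

lemma e2ennreal_uminus_Gfund_le:
  assumes N: "DIM('a::euclidean_space) \<ge> 2"
  shows "e2ennreal (- Gfund y z) \<le> ennreal (norm (y - z::'a))"
proof (cases "y = z")
  case True then show ?thesis by (simp add: Gfund_def e2ennreal_neg)
next
  case False
  let ?r = "norm (y - z)"
  have r: "?r > 0" using False by simp
  show ?thesis
  proof (cases "DIM('a) = 2")
    case True
    have "ln ?r / (2 * pi) \<le> ?r"
    proof (cases "ln ?r \<ge> 0")
      case True
      have "ln ?r \<le> ?r * (2 * pi)"
        using r ln_le_minus_one[of ?r] pi_gt3 by (smt (verit) mult_le_cancel_left1)
      then show ?thesis using pi_gt_zero by (simp add: divide_le_eq)
    next
      case False
      then show ?thesis using r by (smt (verit) divide_nonpos_pos pi_gt_zero)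
    qed
    then show ?thesis using False True r by (simp add: Gfund_def Let_def ln_div)
  next
    case F2: False
    have "0 \<le> ?r powr (2 - real DIM('a)) / ((real DIM('a) - 2) * sphere_area TYPE('a))"
      using N F2 sphere_area_pos[where 'a='a] by (intro divide_nonneg_pos) auto
    then show ?thesis using False F2 by (simp add: Gfund_def Let_def ennreal_neg)
  qed
qed

lemma Gfund_measurable [measurable]:
  "(\<lambda>p. Gfund (fst p) (snd p :: 'a::euclidean_space)) \<in> borel_measurable (borel \<Otimes>\<^sub>M borel)"
  unfolding Gfund_def Let_def by (cases "DIM('a) = 2") simp_all

lemma Gfund_measurable_right [measurable]: "Gfund y \<in> borel_measurable (borel :: 'a::euclidean_space measure)"
proof -
  have "(\<lambda>z. Gfund (fst (y, z)) (snd (y, z :: 'a))) \<in> borel_measurable borel"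
    by measurable
  then show ?thesis by simp
qed

section \<open>Integrals of the kernel over balls\<close>

lemma ball_in_borel [measurable]: "ball (c::'a::euclidean_space) r \<in> sets borel"
  by simp

lemma emeasure_lborel_ball: "emeasure lborel (ball c r) = ennreal (measure lborel (ball (c::'a::euclidean_space) r))"
  using emeasure_lborel_ball_finite[of c r] by (simp add: emeasure_eq_ennreal_measure)

lemma nn_integral_const_indicator_ball:
  assumes "a \<ge> 0"
  shows "(\<integral>\<^sup>+ y. ennreal a * indicator (ball x r) y \<partial>lborel) = ennreal (measure lborel (ball (x::'a::euclidean_space) r) * a)"
  using assms by (simp add: nn_integral_cmult_indicator emeasure_lborel_ball ennreal_mult' mult.commute)

lemma Gfund_indicator_le_dyadic_sum:
  fixes y z :: "'a::euclidean_space"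
  assumes N: "DIM('a) \<ge> 2" and \<rho>: "\<rho> > 0" and "y \<noteq> z"
  shows "e2ennreal (Gfund y z) * indicator (ball z \<rho>) y
     \<le> (\<Sum>j. ennreal (2^((j+1) * (DIM('a)-1)) * (green_radial TYPE('a) \<rho> + green_gap))
               * indicator (ball z (\<rho> / 2^j)) y)"
    (is "_ \<le> (\<Sum>j. ennreal (?c j) * _)")
proof (cases "y \<in> ball z \<rho>")
  case True
  define d where "d = norm (y - z)"
  have d: "0 < d" "d < \<rho>" using assms True by (auto simp: d_def dist_norm norm_minus_commute)
  obtain n where "(1/2::real)^n < d / \<rho>" using real_arch_pow_inv[of "d / \<rho>" "1/2"] d \<rho> by auto
  then have "\<not> d < \<rho> / 2^n" using \<rho> by (simp add: power_one_over field_simps)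
  then obtain J where J: "d < \<rho> / 2^J" "\<not> d < \<rho> / 2^Suc J"
    using ex_least_nat_less[of "\<lambda>j. \<not> d < \<rho> / 2^j" n] d by auto
  have "green_radial TYPE('a) d \<le> green_radial TYPE('a) (\<rho> / 2^Suc J)"
    using J \<rho> by (intro green_radial_antimono[OF N]) auto
  also have "\<dots> \<le> ?c J" using green_radial_divide_pow2[OF N \<rho>, of "Suc J"] by simp
  finally have "e2ennreal (Gfund y z) * indicator (ball z \<rho>) y \<le> ennreal (?c J) * indicator (ball z (\<rho> / 2^J)) y"
    using True J assms by (simp add: e2ennreal_Gfund d_def dist_norm norm_minus_commute ennreal_leI)
  also have "\<dots> \<le> (\<Sum>j. ennreal (?c j) * indicator (ball z (\<rho> / 2^j)) y)"
    using sum_le_suminf[OF summableI, of "{J}" "\<lambda>j. ennreal (?c j) * indicator (ball z (\<rho> / 2^j)) y"]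
    by (simp only: sum.insert finite.emptyI empty_iff not_False_eq_True sum.empty add_0_right) simp
  finally show ?thesis .
qed simp

text \<open>On the shell \<open>\<rho>/2^(j+1) \<le> |y - z| < \<rho>/2^j\<close> the kernel is at most
  \<open>2^((j+1)(N-1)) (K \<rho> + green_gap)\<close>, while the ball of radius \<open>\<rho>/2^j\<close> has \<open>2^(-jN)\<close> times the
  volume of \<open>B_\<rho>\<close>, so the contributions of the shells decay geometrically.\<close>
lemma nn_integral_Gfund_centered_ball_le:
  fixes z :: "'a::euclidean_space"
  assumes N: "DIM('a) \<ge> 2" and \<rho>: "\<rho> > 0"
  shows "(\<integral>\<^sup>+ y. e2ennreal (Gfund y z) * indicator (ball z \<rho>) y \<partial>lborel)
     \<le> ennreal (measure lborel (ball z \<rho>) * (2^DIM('a) * (green_radial TYPE('a) \<rho> + green_gap)))"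
proof -
  let ?N = "DIM('a)"
  define a where "a = green_radial TYPE('a) \<rho> + green_gap"
  define c where "c j = 2^((j+1) * (?N-1)) * a" for j :: nat
  have a: "a \<ge> 0" using green_radial_nonneg[OF N] green_gap_pos by (simp add: a_def add_nonneg_pos less_imp_le)
  have shell: "measure lborel (ball z (\<rho> / 2^j)) * c j = (2^(?N-1) * a * measure lborel (ball z \<rho>)) * (1/2)^j" for j
  proof -
    obtain M where M: "?N = Suc M" using N by (cases ?N) auto
    have ball: "measure lborel (ball z (\<rho> / 2^j)) = (1 / 2^j)^Suc M * measure lborel (ball z \<rho>)"
      using \<rho> M by (simp add: content_ball_conv_unit_ball[of "\<rho> / 2^j"] content_ball_conv_unit_ball[of \<rho>]
          power_divide power_one_over)
    have pow: "(2::real)^((j+1) * M) * (1 / 2^j)^Suc M = 2^M * (1/2)^j"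
      by (simp add: power_add power_mult_distrib power_mult[symmetric] power_one_over field_simps mult.commute)
    have "measure lborel (ball z (\<rho> / 2^j)) * c j
        = (2^((j+1) * M) * (1 / 2^j)^Suc M) * (a * measure lborel (ball z \<rho>))"
      unfolding c_def ball M diff_Suc_1 by (simp only: mult_ac)
    then show ?thesis unfolding pow M diff_Suc_1 by (simp only: mult_ac)
  qed
  have "(\<integral>\<^sup>+ y. e2ennreal (Gfund y z) * indicator (ball z \<rho>) y \<partial>lborel)
       \<le> (\<integral>\<^sup>+ y. (\<Sum>j. ennreal (c j) * indicator (ball z (\<rho> / 2^j)) y) \<partial>lborel)"
    unfolding c_def a_def
    by (intro nn_integral_mono_AE eventually_mono[OF AE_lborel_singleton[of z]]
        Gfund_indicator_le_dyadic_sum N \<rho>)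
  also have "\<dots> = (\<Sum>j. \<integral>\<^sup>+ y. ennreal (c j) * indicator (ball z (\<rho> / 2^j)) y \<partial>lborel)"
    by (rule nn_integral_suminf) measurable
  also have "\<dots> = (\<Sum>j. ennreal (measure lborel (ball z (\<rho> / 2^j)) * c j))"
    using a by (intro suminf_cong nn_integral_const_indicator_ball) (simp add: c_def)
  also have "\<dots> = ennreal (\<Sum>j. (2^(?N-1) * a * measure lborel (ball z \<rho>)) * (1/2)^j)"
    unfolding shell using a by (intro suminf_ennreal2) (auto intro: summable_mult summable_geometric)
  also have "\<dots> = ennreal (measure lborel (ball z \<rho>) * (2^?N * a))"
  proof -
    have "(2::real)^?N = 2^(?N-1) * 2" using N by (cases ?N) auto
    moreover have "(\<Sum>j. (2^(?N-1) * a * measure lborel (ball z \<rho>)) * (1/2::real)^j)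
        = 2^(?N-1) * a * measure lborel (ball z \<rho>) * 2"
      by (simp add: suminf_mult suminf_geometric summable_geometric)
    ultimately show ?thesis by (simp only: mult_ac)
  qed
  finally show ?thesis unfolding a_def .
qed

lemma nn_integral_Gfund_far_ball_le:
  fixes x z :: "'a::euclidean_space"
  assumes N: "DIM('a) \<ge> 2" and r: "r > 0" and far: "2 * r \<le> norm (x - z)"
  shows "(\<integral>\<^sup>+ y. e2ennreal (Gfund y z) * indicator (ball x r) y \<partial>lborel)
     \<le> ennreal (measure lborel (ball x r) * green_radial TYPE('a) (norm (x - z) / 2))"
proof -
  let ?K = "green_radial TYPE('a)"
  have "e2ennreal (Gfund y z) * indicator (ball x r) y \<le> ennreal (?K (norm (x - z) / 2)) * indicator (ball x r) y" for y
  proof (cases "y \<in> ball x r")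
    case y: True
    have "norm (x - z) \<le> norm (x - y) + norm (y - z)" using norm_triangle_ineq[of "x - y" "y - z"] by simp
    then have d: "norm (x - z) / 2 \<le> norm (y - z)" using y far by (auto simp: dist_norm)
    then have "?K (norm (y - z)) \<le> ?K (norm (x - z) / 2)" using r far by (intro green_radial_antimono[OF N]) auto
    then show ?thesis using y d r far by (auto simp: e2ennreal_Gfund ennreal_leI)
  qed simp
  then have "(\<integral>\<^sup>+ y. e2ennreal (Gfund y z) * indicator (ball x r) y \<partial>lborel)
      \<le> (\<integral>\<^sup>+ y. ennreal (?K (norm (x - z) / 2)) * indicator (ball x r) y \<partial>lborel)"
    by (intro nn_integral_mono)
  then show ?thesis using green_radial_nonneg[OF N] by (simp add: nn_integral_const_indicator_ball)
qed

lemma nn_integral_Gfund_ball_le: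
  fixes x z :: "'a::euclidean_space"
  assumes N: "DIM('a) \<ge> 2" and r: "r > 0"
  shows "(\<integral>\<^sup>+ y. e2ennreal (Gfund y z) * indicator (ball x r) y \<partial>lborel)
     \<le> ennreal (measure lborel (ball x r) * (6^DIM('a) * (green_radial TYPE('a) (max (norm (x - z)) r / 2) + green_gap)))"
proof -
  let ?N = "DIM('a)" and ?K = "green_radial TYPE('a)" and ?B = "measure lborel (ball x r)"
  define m where "m = max (norm (x - z)) r"
  have K_nonneg: "?K s \<ge> 0" for s using green_radial_nonneg[OF N] .
  show ?thesis
  proof (cases "2 * r \<le> norm (x - z)")
    case True
    then have "(\<integral>\<^sup>+ y. e2ennreal (Gfund y z) * indicator (ball x r) y \<partial>lborel) \<le> ennreal (?B * ?K (m / 2))"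
      using nn_integral_Gfund_far_ball_le[OF N r True] r by (simp add: m_def max_def)
    also have "?K (m / 2) \<le> 1 * (?K (m / 2) + green_gap)" using green_gap_pos by simp
    also have "\<dots> \<le> 6^?N * (?K (m / 2) + green_gap)"
      using K_nonneg[of "m / 2"] green_gap_pos by (intro mult_right_mono) auto
    finally show ?thesis unfolding m_def by (simp add: ennreal_leI mult_left_mono)
  next
    case False
    have "ball x r \<subseteq> ball z (3 * r)"
    proof
      fix y assume "y \<in> ball x r"
      moreover have "dist z x < 2 * r" using False by (simp add: dist_norm norm_minus_commute)
      ultimately show "y \<in> ball z (3 * r)" using dist_triangle[of z y x] by simp
    qed
    then have "(\<integral>\<^sup>+ y. e2ennreal (Gfund y z) * indicator (ball x r) y \<partial>lborel)
        \<le> (\<integral>\<^sup>+ y. e2ennreal (Gfund y z) * indicator (ball z (3 * r)) y \<partial>lborel)"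
      by (intro nn_integral_mono) (auto split: split_indicator)
    also have "\<dots> \<le> ennreal (measure lborel (ball z (3 * r)) * (2^?N * (?K (3 * r) + green_gap)))"
      using r by (intro nn_integral_Gfund_centered_ball_le N) simp
    also have "measure lborel (ball z (3 * r)) * (2^?N * (?K (3 * r) + green_gap))
        = ?B * (6^?N * (?K (3 * r) + green_gap))"
      using r by (simp add: content_ball_conv_unit_ball[of "3 * r"] content_ball_conv_unit_ball[of r]
          power_mult_distrib flip: power_mult_distrib[of 3 2])
    also have "ennreal (?B * (6^?N * (?K (3 * r) + green_gap))) \<le> ennreal (?B * (6^?N * (?K (m / 2) + green_gap)))"
      using False r by (intro ennreal_leI mult_left_mono add_right_mono green_radial_antimono N) (auto simp: m_def)
    finally show ?thesis unfolding m_def .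
  qed
qed

lemma nn_integral_Gfund_ball_ge:
  fixes x z :: "'a::euclidean_space"
  assumes N: "DIM('a) \<ge> 2"
  shows "ennreal (measure lborel (ball x r) * green_radial TYPE('a) (2 * max (norm (x - z)) r))
     \<le> (\<integral>\<^sup>+ y. e2ennreal (Gfund y z) * indicator (ball x r) y \<partial>lborel)"
proof -
  let ?K = "green_radial TYPE('a)"
  define m where "m = max (norm (x - z)) r"
  have "ennreal (?K (2 * m)) * indicator (ball x r) y \<le> e2ennreal (Gfund y z) * indicator (ball x r) y" for y
  proof (cases "y \<in> ball x r \<and> y \<noteq> z")
    case True
    have "norm (y - z) \<le> norm (y - x) + norm (x - z)" using norm_triangle_ineq[of "y - x" "x - z"] by simp
    then have "norm (y - z) \<le> 2 * m" using True unfolding m_def by (auto simp: dist_norm norm_minus_commute)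
    then have "?K (2 * m) \<le> ?K (norm (y - z))" using True by (intro green_radial_antimono[OF N]) auto
    then show ?thesis using True by (simp add: e2ennreal_Gfund ennreal_leI)
  qed (auto simp: e2ennreal_Gfund split: split_indicator)
  then have "(\<integral>\<^sup>+ y. ennreal (?K (2 * m)) * indicator (ball x r) y \<partial>lborel)
      \<le> (\<integral>\<^sup>+ y. e2ennreal (Gfund y z) * indicator (ball x r) y \<partial>lborel)"
    by (intro nn_integral_mono)
  then show ?thesis using green_radial_nonneg[OF N] by (simp add: nn_integral_const_indicator_ball m_def)
qed

section \<open>Ball averages of the potential\<close>

definition Gpot_plus :: "'a::euclidean_space measure \<Rightarrow> 'a \<Rightarrow> ennreal" where
  "Gpot_plus M y = (\<integral>\<^sup>+ z. e2ennreal (Gfund y z) \<partial>M)"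

definition Gpot_minus :: "'a::euclidean_space measure \<Rightarrow> 'a \<Rightarrow> ennreal" where
  "Gpot_minus M y = (\<integral>\<^sup>+ z. e2ennreal (- Gfund y z) \<partial>M)"

lemma Gpot_eq_plus_minus: "Gpot M y = enn2ereal (Gpot_plus M y) - enn2ereal (Gpot_minus M y)"
  unfolding Gpot_def Gpot_plus_def Gpot_minus_def ..

lemma Gpot_plus_eq_top: "Gpot M y = \<infinity> \<Longrightarrow> Gpot_plus M y = top"
  unfolding Gpot_eq_plus_minus by (cases "Gpot_plus M y"; cases "Gpot_minus M y") auto

lemma
  assumes [measurable_cong]: "sets M = sets borel" and "finite_measure M"
  shows Gpot_plus_measurable [measurable]: "Gpot_plus M \<in> borel_measurable lborel"
    and Gpot_minus_measurable [measurable]: "Gpot_minus M \<in> borel_measurable lborel"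
proof -
  interpret finite_measure M by fact
  have [measurable]: "(\<lambda>p. Gfund (fst p) (snd p)) \<in> borel_measurable (lborel \<Otimes>\<^sub>M M)"
    by measurable
  have "(\<lambda>p. e2ennreal (Gfund (fst p) (snd p))) \<in> borel_measurable (lborel \<Otimes>\<^sub>M M)"
    by measurable
  moreover have "(\<lambda>p. e2ennreal (- Gfund (fst p) (snd p))) \<in> borel_measurable (lborel \<Otimes>\<^sub>M M)"
    using measurable_compose[OF \<open>(\<lambda>p. Gfund (fst p) (snd p)) \<in> _\<close>, of "\<lambda>t. e2ennreal (- t)"] by simp
  ultimately show "Gpot_plus M \<in> borel_measurable lborel" "Gpot_minus M \<in> borel_measurable lborel"
    unfolding Gpot_plus_def Gpot_minus_def
    by (auto intro!: borel_measurable_nn_integral simp: case_prod_unfold)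
qed

lemma nn_integral_Gpot_plus_indicator:
  assumes [measurable_cong]: "sets M = sets borel" and "finite_measure M" and [measurable]: "A \<in> sets borel"
  shows "(\<integral>\<^sup>+ y. Gpot_plus M y * indicator A y \<partial>lborel)
       = (\<integral>\<^sup>+ z. (\<integral>\<^sup>+ y. e2ennreal (Gfund y z) * indicator A y \<partial>lborel) \<partial>M)"
proof -
  interpret finite_measure M by fact
  interpret pair_sigma_finite lborel M
    by (intro pair_sigma_finite.intro sigma_finite_measure_axioms sigma_finite_lborel)
  have "(\<integral>\<^sup>+ y. Gpot_plus M y * indicator A y \<partial>lborel)
      = (\<integral>\<^sup>+ y. (\<integral>\<^sup>+ z. e2ennreal (Gfund y z) * indicator A y \<partial>M) \<partial>lborel)"
    unfolding Gpot_plus_def by (intro nn_integral_cong nn_integral_multc[symmetric]) measurable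
  also have "\<dots> = (\<integral>\<^sup>+ z. (\<integral>\<^sup>+ y. e2ennreal (Gfund y z) * indicator A y \<partial>lborel) \<partial>M)"
    by (rule Fubini'[symmetric]) measurable
  finally show ?thesis .
qed

lemma Gpot_minus_le:
  fixes y :: "'a::euclidean_space"
  assumes N: "DIM('a) \<ge> 2" and M: "sets M = sets borel" "finite_measure M"
    and R: "AE z in M. norm z \<le> R"
  shows "Gpot_minus M y \<le> ennreal ((norm y + R) * measure M (space M))"
proof -
  interpret finite_measure M by fact
  have "Gpot_minus M y \<le> (\<integral>\<^sup>+ z. ennreal (norm y + R) \<partial>M)"
    unfolding Gpot_minus_def
  proof (intro nn_integral_mono_AE eventually_mono[OF R])
    fix z :: 'a assume "norm z \<le> R"
    then have "norm (y - z) \<le> norm y + R" using norm_triangle_ineq4[of y z] by linarith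
    with e2ennreal_uminus_Gfund_le[OF N, of y z] show "e2ennreal (- Gfund y z) \<le> ennreal (norm y + R)"
      by (meson ennreal_leI order.trans)
  qed
  also have "\<dots> \<le> ennreal ((norm y + R) * measure M (space M))"
    by (cases "norm y + R \<ge> 0") (auto simp: emeasure_eq_measure ennreal_mult' ennreal_neg)
  finally show ?thesis .
qed

definition trunc_pot :: "'a::euclidean_space measure \<Rightarrow> real \<Rightarrow> 'a \<Rightarrow> real \<Rightarrow> real" where
  "trunc_pot M c x r = enn2real (\<integral>\<^sup>+ z. ennreal (green_radial TYPE('a) (c * max (norm (x - z)) r)) \<partial>M)"

lemma trunc_pot_nonneg [simp]: "trunc_pot M c x r \<ge> 0"
  unfolding trunc_pot_def by simp

lemma ennreal_trunc_pot:
  fixes x :: "'a::euclidean_space"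
  assumes N: "DIM('a) \<ge> 2" and [measurable_cong]: "sets M = sets borel" and "finite_measure M"
    and "c > 0" "r > 0"
  shows "ennreal (trunc_pot M c x r) = (\<integral>\<^sup>+ z. ennreal (green_radial TYPE('a) (c * max (norm (x - z)) r)) \<partial>M)"
proof -
  interpret finite_measure M by fact
  have "(\<integral>\<^sup>+ z. ennreal (green_radial TYPE('a) (c * max (norm (x - z)) r)) \<partial>M)
      \<le> (\<integral>\<^sup>+ z. ennreal (green_radial TYPE('a) (c * r)) \<partial>M)"
    using assms by (intro nn_integral_mono ennreal_leI green_radial_antimono[OF N]) auto
  also have "\<dots> < \<infinity>" by (simp add: emeasure_eq_measure ennreal_mult_less_top)
  finally show ?thesis unfolding trunc_pot_def by (simp add: less_top)
qed

lemma trunc_pot_antimono: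
  fixes x :: "'a::euclidean_space"
  assumes N: "DIM('a) \<ge> 2" and M: "sets M = sets borel" "finite_measure M"
    and "0 < c" "c \<le> c'" "r > 0"
  shows "trunc_pot M c' x r \<le> trunc_pot M c x r"
proof -
  have "(\<integral>\<^sup>+ z. ennreal (green_radial TYPE('a) (c' * max (norm (x - z)) r)) \<partial>M)
      \<le> (\<integral>\<^sup>+ z. ennreal (green_radial TYPE('a) (c * max (norm (x - z)) r)) \<partial>M)"
    using assms by (intro nn_integral_mono ennreal_leI green_radial_antimono[OF N] mult_right_mono) auto
  then show ?thesis
    using assms by (simp add: ennreal_trunc_pot[OF N M, symmetric])
qed

lemma trunc_pot_divide_pow2:
  fixes x :: "'a::euclidean_space"
  assumes N: "DIM('a) \<ge> 2" and M [measurable_cong]: "sets M = sets borel" and fin: "finite_measure M"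
    and c: "c > 0" and r: "r > 0"
  shows "trunc_pot M (c / 2^n) x r
     \<le> 2^(n * (DIM('a) - 1)) * (trunc_pot M c x r + green_gap * measure M (space M))"
proof -
  interpret finite_measure M by fact
  let ?K = "green_radial TYPE('a)" and ?A = "(2::real)^(n * (DIM('a) - 1))"
  have "ennreal (trunc_pot M (c / 2^n) x r) = (\<integral>\<^sup>+ z. ennreal (?K (c / 2^n * max (norm (x - z)) r)) \<partial>M)"
    using c r by (intro ennreal_trunc_pot N M fin) auto
  also have "\<dots> \<le> (\<integral>\<^sup>+ z. ennreal ?A * (ennreal (?K (c * max (norm (x - z)) r)) + ennreal green_gap) \<partial>M)"
  proof (intro nn_integral_mono)
    fix z
    have "?K (c / 2^n * max (norm (x - z)) r) \<le> ?A * (?K (c * max (norm (x - z)) r) + green_gap)"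
      using green_radial_divide_pow2[OF N, of "c * max (norm (x - z)) r" n] c r by (simp add: field_simps)
    then have "ennreal (?K (c / 2^n * max (norm (x - z)) r))
        \<le> ennreal (?A * (?K (c * max (norm (x - z)) r) + green_gap))"
      by (rule ennreal_leI)
    then show "ennreal (?K (c / 2^n * max (norm (x - z)) r))
        \<le> ennreal ?A * (ennreal (?K (c * max (norm (x - z)) r)) + ennreal green_gap)"
      using green_radial_nonneg[OF N] green_gap_pos
      by (simp add: ennreal_mult ennreal_plus[symmetric] del: ennreal_plus)
  qed
  also have "\<dots> = ennreal ?A * (ennreal (trunc_pot M c x r) + ennreal green_gap * emeasure M (space M))"
    using c r by (simp add: nn_integral_cmult nn_integral_add ennreal_trunc_pot[OF N M fin])
  also have "\<dots> = ennreal (?A * (trunc_pot M c x r + green_gap * measure M (space M)))"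
    using green_gap_pos
    by (simp add: emeasure_eq_measure ennreal_mult[symmetric] ennreal_plus[symmetric] del: ennreal_plus)
  finally show ?thesis
    using green_gap_pos by (simp add: ennreal_le_iff)
qed

lemma ennreal_real_of_ereal_diff_le: "ennreal (real_of_ereal (enn2ereal a - enn2ereal b)) \<le> a"
  by (cases a; cases b) (auto simp: ennreal_leI)

lemma set_integral_real_of_ereal_diff_le:
  assumes "(\<integral>\<^sup>+ y. P y * indicator B y \<partial>M) \<le> ennreal b" "0 \<le> b"
  shows "(\<integral> y\<in>B. real_of_ereal (enn2ereal (P y) - enn2ereal (Q y)) \<partial>M) \<le> b"
  unfolding set_lebesgue_integral_def
proof (rule integral_real_bounded)
  have "(\<integral>\<^sup>+ y. ennreal (indicator B y *\<^sub>R real_of_ereal (enn2ereal (P y) - enn2ereal (Q y))) \<partial>M)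
      \<le> (\<integral>\<^sup>+ y. P y * indicator B y \<partial>M)"
    by (intro nn_integral_mono) (auto simp: ennreal_real_of_ereal_diff_le split: split_indicator)
  then show "(\<integral>\<^sup>+ y. ennreal (indicator B y *\<^sub>R real_of_ereal (enn2ereal (P y) - enn2ereal (Q y))) \<partial>M)
      \<le> ennreal b"
    using assms(1) by (rule order.trans)
qed (fact assms(2))

text \<open>\<open>real_of_ereal\<close> sends \<open>\<infinity>\<close> to \<open>0\<close>; this junk value is harmless because the finiteness of
  the integral of \<open>P\<close> over \<open>B\<close> makes \<open>P\<close> finite almost everywhere on \<open>B\<close>.\<close>
lemma set_integral_real_of_ereal_diff_ge:
  assumes [measurable]: "P \<in> borel_measurable M" "Q \<in> borel_measurable M" "B \<in> sets M"
    and B: "emeasure M B < \<infinity>" and P: "(\<integral>\<^sup>+ y. P y * indicator B y \<partial>M) < \<infinity>"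
    and Q: "\<And>y. y \<in> B \<Longrightarrow> Q y \<le> ennreal C" and C: "0 \<le> C"
  shows "enn2real (\<integral>\<^sup>+ y. P y * indicator B y \<partial>M) - C * measure M B
     \<le> (\<integral> y\<in>B. real_of_ereal (enn2ereal (P y) - enn2ereal (Q y)) \<partial>M)"
proof -
  define g where "g y = indicator B y * enn2real (P y)" for y
  define h where "h y = indicator B y * enn2real (Q y)" for y
  have "AE y in M. P y * indicator B y \<noteq> \<infinity>"
    using P by (intro nn_integral_PInf_AE) auto
  then have P_finite: "AE y in M. y \<in> B \<longrightarrow> P y \<noteq> \<infinity>"
    by (rule eventually_mono) (auto split: split_indicator)
  have [measurable]: "g \<in> borel_measurable M" "h \<in> borel_measurable M"
    unfolding g_def h_def by measurable
  have nn_g: "(\<integral>\<^sup>+ y. ennreal (g y) \<partial>M) = (\<integral>\<^sup>+ y. P y * indicator B y \<partial>M)"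
    by (intro nn_integral_cong_AE eventually_mono[OF P_finite])
      (auto simp: g_def less_top split: split_indicator)
  have nn_h: "(\<integral>\<^sup>+ y. ennreal (h y) \<partial>M) \<le> (\<integral>\<^sup>+ y. ennreal C * indicator B y \<partial>M)"
  proof (intro nn_integral_mono)
    fix y
    have "ennreal (enn2real (Q y)) \<le> Q y" by (cases "Q y") auto
    then show "ennreal (h y) \<le> ennreal C * indicator B y"
      using Q[of y] by (auto simp: h_def split: split_indicator)
  qed
  have g: "integrable M g" using nn_g P by (intro integrableI_nonneg) (auto simp: g_def)
  have h: "integrable M h"
    using nn_h B by (intro integrableI_nonneg) (auto simp: h_def nn_integral_cmult_indicator ennreal_mult_less_top
        intro: le_less_trans)
  have "(\<integral> y\<in>B. real_of_ereal (enn2ereal (P y) - enn2ereal (Q y)) \<partial>M) = integral\<^sup>L M (\<lambda>y. g y - h y)"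
    unfolding set_lebesgue_integral_def
  proof (intro integral_cong_AE eventually_mono[OF P_finite])
    fix y assume "y \<in> B \<longrightarrow> P y \<noteq> \<infinity>"
    moreover have "y \<in> B \<Longrightarrow> Q y \<noteq> \<infinity>" using Q[of y] by (auto simp: top_unique)
    ultimately show "indicator B y *\<^sub>R real_of_ereal (enn2ereal (P y) - enn2ereal (Q y)) = g y - h y"
      by (cases "P y"; cases "Q y") (auto simp: g_def h_def split: split_indicator)
  qed (auto simp: g_def h_def)
  also have "\<dots> = integral\<^sup>L M g - integral\<^sup>L M h"
    using g h by (rule Bochner_Integration.integral_diff)
  moreover have "integral\<^sup>L M g = enn2real (\<integral>\<^sup>+ y. P y * indicator B y \<partial>M)"
    using nn_g by (subst integral_eq_nn_integral) (auto simp: g_def)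
  moreover have "integral\<^sup>L M h \<le> C * measure M B"
    using nn_h B C by (intro integral_real_bounded)
      (auto simp: nn_integral_cmult_indicator emeasure_eq_ennreal_measure ennreal_mult' mult.commute less_top)
  ultimately show ?thesis by linarith
qed

lemma nn_integral_Gpot_plus_ball_le:
  fixes x :: "'a::euclidean_space"
  assumes N: "DIM('a) \<ge> 2" and M [measurable_cong]: "sets M = sets borel" and fin: "finite_measure M"
    and r: "r > 0"
  shows "(\<integral>\<^sup>+ y. Gpot_plus M y * indicator (ball x r) y \<partial>lborel)
     \<le> ennreal (measure lborel (ball x r) * (6^DIM('a) * (trunc_pot M (1/2) x r + green_gap * measure M (space M))))"
proof -
  interpret finite_measure M by fact
  let ?K = "green_radial TYPE('a)" and ?c = "measure lborel (ball x r) * 6^DIM('a)"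
  have "(\<integral>\<^sup>+ y. Gpot_plus M y * indicator (ball x r) y \<partial>lborel)
      = (\<integral>\<^sup>+ z. (\<integral>\<^sup>+ y. e2ennreal (Gfund y z) * indicator (ball x r) y \<partial>lborel) \<partial>M)"
    by (intro nn_integral_Gpot_plus_indicator M fin) simp
  also have "\<dots> \<le> (\<integral>\<^sup>+ z. ennreal ?c * (ennreal (?K (1/2 * max (norm (x - z)) r)) + ennreal green_gap) \<partial>M)"
  proof (intro nn_integral_mono)
    fix z
    have "(\<integral>\<^sup>+ y. e2ennreal (Gfund y z) * indicator (ball x r) y \<partial>lborel)
        \<le> ennreal (?c * (?K (1/2 * max (norm (x - z)) r) + green_gap))"
      using nn_integral_Gfund_ball_le[OF N r, where x=x and z=z] by (simp add: mult.assoc)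
    then show "(\<integral>\<^sup>+ y. e2ennreal (Gfund y z) * indicator (ball x r) y \<partial>lborel)
        \<le> ennreal ?c * (ennreal (?K (1/2 * max (norm (x - z)) r)) + ennreal green_gap)"
      using green_radial_nonneg[OF N] green_gap_pos
      by (simp add: ennreal_mult ennreal_plus[symmetric] del: ennreal_plus)
  qed
  also have "\<dots> = ennreal ?c * ((\<integral>\<^sup>+ z. ennreal (?K (1/2 * max (norm (x - z)) r)) \<partial>M)
                                   + ennreal green_gap * emeasure M (space M))"
    by (simp add: nn_integral_cmult nn_integral_add)
  also have "\<dots> = ennreal ?c * (ennreal (trunc_pot M (1/2) x r) + ennreal green_gap * emeasure M (space M))"
    using r by (simp add: ennreal_trunc_pot[OF N M fin])
  also have "\<dots> = ennreal (?c * (trunc_pot M (1/2) x r + green_gap * measure M (space M)))"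
    using green_gap_pos
    by (simp add: emeasure_eq_measure ennreal_mult[symmetric] ennreal_plus[symmetric] del: ennreal_plus)
  finally show ?thesis by (simp add: mult.assoc)
qed

lemma nn_integral_Gpot_plus_ball_ge:
  fixes x :: "'a::euclidean_space"
  assumes N: "DIM('a) \<ge> 2" and M [measurable_cong]: "sets M = sets borel" and fin: "finite_measure M"
    and r: "r > 0"
  shows "ennreal (measure lborel (ball x r) * trunc_pot M 2 x r)
     \<le> (\<integral>\<^sup>+ y. Gpot_plus M y * indicator (ball x r) y \<partial>lborel)"
proof -
  let ?K = "green_radial TYPE('a)"
  have "ennreal (measure lborel (ball x r) * trunc_pot M 2 x r)
      = (\<integral>\<^sup>+ z. ennreal (measure lborel (ball x r) * ?K (2 * max (norm (x - z)) r)) \<partial>M)"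
    using r green_radial_nonneg[OF N]
    by (simp add: ennreal_mult nn_integral_cmult ennreal_trunc_pot[OF N M fin])
  also have "\<dots> \<le> (\<integral>\<^sup>+ z. (\<integral>\<^sup>+ y. e2ennreal (Gfund y z) * indicator (ball x r) y \<partial>lborel) \<partial>M)"
    by (intro nn_integral_mono nn_integral_Gfund_ball_ge N)
  also have "\<dots> = (\<integral>\<^sup>+ y. Gpot_plus M y * indicator (ball x r) y \<partial>lborel)"
    by (intro nn_integral_Gpot_plus_indicator[symmetric] M fin) simp
  finally show ?thesis .
qed

lemma ball_avg_Gpot_le:
  fixes x :: "'a::euclidean_space"
  assumes N: "DIM('a) \<ge> 2" and M: "sets M = sets borel" "finite_measure M" and r: "r > 0"
  shows "ball_avg (Gpot M) x r \<le> 6^DIM('a) * (trunc_pot M (1/2) x r + green_gap * measure M (space M))"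
proof -
  let ?B = "measure lborel (ball x r)" and ?b = "6^DIM('a) * (trunc_pot M (1/2) x r + green_gap * measure M (space M))"
  have B: "?B > 0" using content_ball_pos[OF r] by simp
  have "(\<integral> y\<in>ball x r. real_of_ereal (Gpot M y) \<partial>lborel) \<le> ?B * ?b"
    unfolding Gpot_eq_plus_minus
    using nn_integral_Gpot_plus_ball_le[OF N M r] green_gap_pos B
    by (intro set_integral_real_of_ereal_diff_le) auto
  then show ?thesis
    using B unfolding ball_avg_def by (simp add: field_simps)
qed

lemma ball_avg_Gpot_ge:
  fixes x :: "'a::euclidean_space"
  assumes N: "DIM('a) \<ge> 2" and M [measurable_cong]: "sets M = sets borel" and fin: "finite_measure M"
    and R: "AE z in M. norm z \<le> R" "0 \<le> R" and r: "0 < r" "r \<le> 1"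
  shows "trunc_pot M 2 x r - (norm x + 1 + R) * measure M (space M) \<le> ball_avg (Gpot M) x r"
proof -
  let ?B = "measure lborel (ball x r)" and ?C = "(norm x + 1 + R) * measure M (space M)"
  let ?P = "\<integral>\<^sup>+ y. Gpot_plus M y * indicator (ball x r) y \<partial>lborel"
  have B: "?B > 0" using content_ball_pos[OF r(1)] by simp
  have P: "?P < \<infinity>"
    using nn_integral_Gpot_plus_ball_le[OF N M fin r(1), where x=x] by (rule le_less_trans) simp
  have Q: "Gpot_minus M y \<le> ennreal ?C" if "y \<in> ball x r" for y
  proof -
    have "norm y \<le> norm x + 1"
      using that r norm_triangle_ineq2[of y x] by (simp add: dist_norm norm_minus_commute)
    then have "(norm y + R) * measure M (space M) \<le> ?C" by (intro mult_right_mono) auto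
    then show ?thesis using Gpot_minus_le[OF N M fin R(1), of y] by (meson ennreal_leI order.trans)
  qed
  have "enn2real (ennreal (?B * trunc_pot M 2 x r)) \<le> enn2real ?P"
    using nn_integral_Gpot_plus_ball_ge[OF N M fin r(1), where x=x] P by (intro enn2real_mono) auto
  then have "?B * trunc_pot M 2 x r \<le> enn2real ?P" using B by simp
  moreover have "enn2real ?P - ?C * ?B \<le> (\<integral> y\<in>ball x r. real_of_ereal (Gpot M y) \<partial>lborel)"
    unfolding Gpot_eq_plus_minus
    using R(2) by (intro set_integral_real_of_ereal_diff_ge Gpot_plus_measurable Gpot_minus_measurable
        M fin P Q emeasure_lborel_ball_finite) auto
  ultimately have "?B * trunc_pot M 2 x r - ?C * ?B \<le> (\<integral> y\<in>ball x r. real_of_ereal (Gpot M y) \<partial>lborel)"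
    by linarith
  then show ?thesis
    using B unfolding ball_avg_def by (simp add: field_simps)
qed

section \<open>Blow-up of the truncated potential\<close>

lemma e2ennreal_Gfund_le_SUP:
  fixes x z :: "'a::euclidean_space"
  assumes N: "DIM('a) \<ge> 2"
  shows "e2ennreal (Gfund x z) \<le> (SUP n. ennreal (green_radial TYPE('a) (max (norm (x - z)) (1 / Suc n))))"
    (is "_ \<le> (SUP n. ?f n)")
proof (cases "z = x")
  case True
  have "of_nat k \<le> (SUP n. ?f n)" for k
  proof -
    obtain n where "real k \<le> green_radial TYPE('a) (1 / Suc n)" using green_radial_unbounded[OF N] by blast
    then have "of_nat k \<le> ?f n" using True by (simp add: ennreal_of_nat_eq_real_of_nat ennreal_leI)
    also have "\<dots> \<le> (SUP n. ?f n)" by (rule SUP_upper) simp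
    finally show ?thesis .
  qed
  then have "(SUP k. of_nat k :: ennreal) \<le> (SUP n. ?f n)"
    by (intro SUP_least)
  then have SUP_top: "(SUP n. ?f n) = top"
    by (simp add: ennreal_SUP_of_nat_eq_top top_unique)
  show ?thesis unfolding SUP_top by (rule top_greatest)
next
  case False
  then obtain n :: nat where "n > 0" "inverse (real n) < norm (x - z)"
    using ex_inverse_of_nat_less[of "norm (x - z)"] by auto
  moreover have "1 / real (Suc n) \<le> inverse (real n)" using \<open>n > 0\<close> by (simp add: field_simps)
  ultimately have "1 / Suc n < norm (x - z)" by linarith
  then have "e2ennreal (Gfund x z) = ?f n" using False by (simp add: e2ennreal_Gfund)
  also have "\<dots> \<le> (SUP n. ?f n)" by (rule SUP_upper) simp
  finally show ?thesis .
qed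

lemma Gpot_plus_le_SUP:
  fixes x :: "'a::euclidean_space"
  assumes N: "DIM('a) \<ge> 2" and M [measurable_cong]: "sets M = sets borel"
  shows "Gpot_plus M x
     \<le> (SUP n. \<integral>\<^sup>+ z. ennreal (green_radial TYPE('a) (max (norm (x - z)) (1 / Suc n))) \<partial>M)"
proof -
  define f where "f n z = ennreal (green_radial TYPE('a) (max (norm (x - z)) (1 / Suc n)))" for n :: nat and z
  have f_measurable: "f n \<in> borel_measurable M" for n unfolding f_def by measurable
  have "incseq f"
  proof (intro incseq_SucI le_funI)
    fix n z
    have "1 / real (Suc (Suc n)) \<le> 1 / Suc n" by (simp add: frac_le)
    then show "f n z \<le> f (Suc n) z"
      unfolding f_def by (intro ennreal_leI green_radial_antimono[OF N]) (auto simp: max_def)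
  qed
  have "Gpot_plus M x \<le> (\<integral>\<^sup>+ z. (SUP n. f n z) \<partial>M)"
    unfolding Gpot_plus_def f_def by (intro nn_integral_mono e2ennreal_Gfund_le_SUP N)
  also have "\<dots> = (SUP n. integral\<^sup>N M (f n))"
    by (rule nn_integral_monotone_convergence_SUP[OF \<open>incseq f\<close> f_measurable])
  finally show ?thesis unfolding f_def .
qed

lemma eventually_trunc_pot_ge:
  fixes x :: "'a::euclidean_space"
  assumes N: "DIM('a) \<ge> 2" and M: "sets M = sets borel" and fin: "finite_measure M"
    and G: "Gpot M x = \<infinity>"
  shows "\<forall>\<^sub>F r in at_right 0. C \<le> trunc_pot M 1 x r"
proof -
  let ?K = "green_radial TYPE('a)"
  have SUP_top: "(SUP n. \<integral>\<^sup>+ z. ennreal (?K (max (norm (x - z)) (1 / Suc n))) \<partial>M) = top"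
    using Gpot_plus_le_SUP[OF N M, of x] Gpot_plus_eq_top[OF G] by (simp add: top_unique)
  have "ennreal C < (SUP n. \<integral>\<^sup>+ z. ennreal (?K (max (norm (x - z)) (1 / Suc n))) \<partial>M)"
    unfolding SUP_top by (rule ennreal_less_top)
  then obtain n where n: "ennreal C < (\<integral>\<^sup>+ z. ennreal (?K (max (norm (x - z)) (1 / Suc n))) \<partial>M)"
    unfolding less_SUP_iff by blast
  have "C \<le> trunc_pot M 1 x r" if r: "0 < r" "r < 1 / Suc n" for r
  proof -
    have "(\<integral>\<^sup>+ z. ennreal (?K (max (norm (x - z)) (1 / Suc n))) \<partial>M)
        \<le> (\<integral>\<^sup>+ z. ennreal (?K (1 * max (norm (x - z)) r)) \<partial>M)"
      using r by (intro nn_integral_mono ennreal_leI green_radial_antimono[OF N]) auto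
    also have "\<dots> = ennreal (trunc_pot M 1 x r)"
      using r by (intro ennreal_trunc_pot[symmetric] N M fin) auto
    finally have "ennreal C < ennreal (trunc_pot M 1 x r)" by (rule less_le_trans[OF n])
    then show ?thesis
    proof (cases "C \<ge> 0")
      case False
      then show ?thesis using trunc_pot_nonneg[of M 1 x r] by linarith
    qed (simp add: ennreal_less_iff)
  qed
  then show ?thesis unfolding eventually_at_right_field
    by (intro exI[of _ "1 / Suc n"]) auto
qed

lemma trunc_pot_tendsto_top:
  fixes x :: "'a::euclidean_space"
  assumes N: "DIM('a) \<ge> 2" and M: "sets M = sets borel" and fin: "finite_measure M"
    and G: "Gpot M x = \<infinity>" and c: "c > 0"
  shows "filterlim (trunc_pot M c x) at_top (at_right 0)"
proof -
  obtain n :: nat where n: "c \<le> 2^n" using real_arch_pow[of 2 c] by (auto intro: less_imp_le)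
  define A :: real where "A = 2^(n * (DIM('a) - 1))"
  define b where "b = green_gap * measure M (space M)"
  have A: "A > 0" unfolding A_def by simp
  have "- b + 1 / A * trunc_pot M 1 x r \<le> trunc_pot M c x r" if r: "r > 0" for r
  proof -
    have "trunc_pot M ((2^n) / 2^n) x r \<le> A * (trunc_pot M (2^n) x r + b)"
      unfolding A_def b_def using r by (intro trunc_pot_divide_pow2 N M fin) auto
    also have "\<dots> \<le> A * (trunc_pot M c x r + b)"
      using r c n A by (intro mult_left_mono add_right_mono trunc_pot_antimono N M fin) auto
    finally have "trunc_pot M 1 x r \<le> A * (trunc_pot M c x r + b)" by simp
    then show ?thesis using A by (simp add: field_simps)
  qed
  then have "\<forall>\<^sub>F r in at_right 0. - b + 1 / A * trunc_pot M 1 x r \<le> trunc_pot M c x r"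
    unfolding eventually_at_right_field by (intro exI[of _ 1]) auto
  moreover have "filterlim (\<lambda>r. - b + 1 / A * trunc_pot M 1 x r) at_top (at_right 0)"
  proof (intro filterlim_tendsto_add_at_top[of "\<lambda>_. - b" "- b"] filterlim_tendsto_pos_mult_at_top[of "\<lambda>_. 1 / A" "1 / A"])
    show "filterlim (trunc_pot M 1 x) at_top (at_right 0)"
      unfolding filterlim_at_top by (intro allI eventually_trunc_pot_ge N M fin G)
  qed (use A in auto)
  ultimately show ?thesis by (rule filterlim_at_top_mono[rotated])
qed

section \<open>Radially decreasing kernels against comparable measures\<close>

lemma emeasure_lborel_greaterThan: "emeasure lborel {a::real<..} = \<infinity>"
proof -
  have "ennreal (real n) \<le> emeasure lborel {a<..}" for n
  proof -
    have "ennreal (real n) = emeasure lborel {a<..a + real n}" by simp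
    also have "\<dots> \<le> emeasure lborel {a<..}" by (intro emeasure_mono) auto
    finally show ?thesis .
  qed
  then have "(SUP n. of_nat n :: ennreal) \<le> emeasure lborel {a<..}"
    by (intro SUP_least) (simp add: ennreal_of_nat_eq_real_of_nat)
  then show ?thesis by (simp add: ennreal_SUP_of_nat_eq_top top_unique)
qed

lemma emeasure_lborel_ennreal_le: "emeasure lborel {t::real. 0 < t \<and> ennreal t \<le> a} = a"
proof (cases a rule: ennreal_cases)
  case (real r)
  then have "{t. 0 < t \<and> ennreal t \<le> a} = {0<..r}" by (auto simp: ennreal_le_iff)
  then show ?thesis using real by simp
next
  case top
  then have "{t. 0 < t \<and> ennreal t \<le> a} = {0<..}" by auto
  then show ?thesis using top emeasure_lborel_greaterThan by simp
qed

lemma nn_integral_layer_cake: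
  assumes "sigma_finite_measure M" and [measurable]: "f \<in> borel_measurable M"
  shows "(\<integral>\<^sup>+ z. f z \<partial>M) = (\<integral>\<^sup>+ t. emeasure M {z \<in> space M. ennreal t \<le> f z} * indicator {0<..} t \<partial>lborel)"
proof -
  interpret sigma_finite_measure M by fact
  interpret pair_sigma_finite M lborel
    by (intro pair_sigma_finite.intro sigma_finite_measure_axioms sigma_finite_lborel)
  define F :: "_ \<Rightarrow> real \<Rightarrow> ennreal" where "F z t = indicator {t. 0 < t \<and> ennreal t \<le> f z} t" for z t
  have [measurable]: "(\<lambda>p. F (fst p) (snd p)) \<in> borel_measurable (M \<Otimes>\<^sub>M lborel)"
    unfolding F_def by measurable
  have "f z = (\<integral>\<^sup>+ t. F z t \<partial>lborel)" for z
  proof -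
    have "{t. 0 < t \<and> ennreal t \<le> f z} \<in> sets lborel" by measurable
    then show ?thesis unfolding F_def by (simp add: emeasure_lborel_ennreal_le)
  qed
  then have "(\<integral>\<^sup>+ z. f z \<partial>M) = (\<integral>\<^sup>+ t. (\<integral>\<^sup>+ z. F z t \<partial>M) \<partial>lborel)"
    by (simp add: Fubini'[of "\<lambda>z t. F z t"] case_prod_unfold)
  also have "\<dots> = (\<integral>\<^sup>+ t. emeasure M {z \<in> space M. ennreal t \<le> f z} * indicator {0<..} t \<partial>lborel)"
  proof (intro nn_integral_cong)
    fix t :: real
    have "(\<integral>\<^sup>+ z. F z t \<partial>M) = (\<integral>\<^sup>+ z. indicator {0<..} t * indicator {z \<in> space M. ennreal t \<le> f z} z \<partial>M)"
      by (intro nn_integral_cong) (auto simp: F_def split: split_indicator)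
    also have "\<dots> = indicator {0<..} t * emeasure M {z \<in> space M. ennreal t \<le> f z}"
      by (subst nn_integral_cmult) auto
    finally show "(\<integral>\<^sup>+ z. F z t \<partial>M) = emeasure M {z \<in> space M. ennreal t \<le> f z} * indicator {0<..} t"
      by (simp add: mult.commute)
  qed
  finally show ?thesis .
qed

context
  fixes g :: "real \<Rightarrow> real" and r :: real
  assumes g_cont: "continuous_on UNIV g"
    and g_antimono: "\<And>s t. 0 \<le> s \<Longrightarrow> s \<le> t \<Longrightarrow> g t \<le> g s"
    and r: "r > 0" and g_flat: "\<And>s. 0 \<le> s \<Longrightarrow> s \<le> r \<Longrightarrow> g s = g 0"
begin

text \<open>The plateau of \<open>g\<close> on \<open>[0, r]\<close> matters when the level set reduces to \<open>{0}\<close>: it still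
  provides a positive radius.\<close>
lemma superlevel_set_radius:
  assumes \<delta>: "\<delta> > 0" and S: "s \<in> {0..<\<delta>}" "t \<le> g s"
  shows "\<exists>\<rho>. 0 < \<rho> \<and> \<rho> \<le> \<delta> \<and> t \<le> g \<rho> \<and> (\<forall>s\<in>{0..<\<delta>}. t \<le> g s \<longrightarrow> s \<le> \<rho>)"
proof -
  define L where "L = {s \<in> {0..<\<delta>}. t \<le> g s}"
  have bdd: "bdd_above L" unfolding L_def by (intro bdd_aboveI[of _ \<delta>]) auto
  have "L \<noteq> {}" using S by (auto simp: L_def)
  define a where "a = Sup L"
  have a_upper: "s \<le> a" if "s \<in> L" for s unfolding a_def using bdd that by (rule cSup_upper[rotated])
  have a: "0 \<le> a" "a \<le> \<delta>"
    using a_upper[of s] S \<open>L \<noteq> {}\<close> unfolding a_def by (auto simp: L_def intro!: cSup_least)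
  have "a \<in> closure L" unfolding a_def using \<open>L \<noteq> {}\<close> bdd by (rule closure_contains_Sup)
  also have "closure L \<subseteq> {s. t \<le> g s}"
    by (intro closure_minimal closed_Collect_le continuous_on_const g_cont) (auto simp: L_def)
  finally have ta: "t \<le> g a" by simp
  define \<rho> where "\<rho> = max a (min r \<delta> / 2)"
  have "t \<le> g \<rho>"
  proof (cases "a \<le> min r \<delta> / 2")
    case True
    then have "g \<rho> = g 0" using r \<delta> by (intro g_flat) (auto simp: \<rho>_def)
    also have "g 0 \<ge> g a" using a by (intro g_antimono) auto
    finally show ?thesis using ta by simp
  next
    case False
    then show ?thesis using ta by (auto simp: \<rho>_def max_def)
  qed
  moreover have "0 < \<rho>" "\<rho> \<le> \<delta>" "a \<le> \<rho>" unfolding \<rho>_def using r \<delta> a by auto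
  ultimately show ?thesis using a_upper unfolding L_def by (intro exI[of _ \<rho>]) force
qed

lemma emeasure_superlevel_le_density:
  fixes x :: "'a::euclidean_space"
  assumes \<mu> [measurable_cong]: "sets \<mu> = sets borel" and \<nu>: "sets \<nu> = sets borel"
    and \<delta>: "\<delta> > 0" and t: "t > 0"
    and density: "\<And>\<rho>. 0 < \<rho> \<Longrightarrow> \<rho> \<le> \<delta> \<Longrightarrow> emeasure \<nu> (cball x \<rho>) \<le> e * emeasure \<mu> (cball x (5 * \<rho>))"
  shows "emeasure \<nu> {z \<in> space \<nu>. ennreal t \<le> ennreal (g (norm (x - z))) * indicator (ball x \<delta>) z}
     \<le> e * emeasure \<mu> {z \<in> space \<mu>. ennreal t \<le> ennreal (g (norm (x - z) / 5))}"
    (is "emeasure \<nu> ?L\<nu> \<le> e * emeasure \<mu> ?L\<mu>")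
proof (cases "\<exists>s\<in>{0..<\<delta>}. t \<le> g s")
  case True
  then obtain \<rho> where \<rho>: "0 < \<rho>" "\<rho> \<le> \<delta>" "t \<le> g \<rho>" "\<And>s. s \<in> {0..<\<delta>} \<Longrightarrow> t \<le> g s \<Longrightarrow> s \<le> \<rho>"
    using superlevel_set_radius[OF \<delta>] by blast
  have space: "space \<mu> = UNIV" "space \<nu> = UNIV"
    using sets_eq_imp_space_eq[OF \<mu>] sets_eq_imp_space_eq[OF \<nu>] by simp_all
  have [measurable]: "g \<in> borel_measurable borel"
    using g_cont by (rule borel_measurable_continuous_onI)
  have "?L\<nu> \<subseteq> cball x \<rho>"
    using t \<rho>(4) by (auto simp: space dist_norm ennreal_le_iff2 split: split_indicator)
  then have "emeasure \<nu> ?L\<nu> \<le> emeasure \<nu> (cball x \<rho>)" by (intro emeasure_mono) (auto simp: \<nu>)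
  also have "\<dots> \<le> e * emeasure \<mu> (cball x (5 * \<rho>))" using density \<rho> by blast
  also have "cball x (5 * \<rho>) \<subseteq> ?L\<mu>"
  proof
    fix z assume "z \<in> cball x (5 * \<rho>)"
    then have "g \<rho> \<le> g (norm (x - z) / 5)" by (intro g_antimono) (auto simp: dist_norm)
    then show "z \<in> ?L\<mu>" using \<rho>(3) by (simp add: space ennreal_leI)
  qed
  then have "e * emeasure \<mu> (cball x (5 * \<rho>)) \<le> e * emeasure \<mu> ?L\<mu>"
    by (intro mult_left_mono emeasure_mono) auto
  finally show ?thesis .
next
  case False
  then have empty: "?L\<nu> = {}"
    using t by (auto simp: dist_norm not_le split: split_indicator intro!: ennreal_lessI)
  show ?thesis unfolding empty by simp
qed

lemma nn_integral_radial_density_le: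
  fixes x :: "'a::euclidean_space"
  assumes \<mu> [measurable_cong]: "sets \<mu> = sets borel" "finite_measure \<mu>"
    and \<nu> [measurable_cong]: "sets \<nu> = sets borel" "finite_measure \<nu>"
    and \<delta>: "\<delta> > 0"
    and density: "\<And>\<rho>. 0 < \<rho> \<Longrightarrow> \<rho> \<le> \<delta> \<Longrightarrow> emeasure \<nu> (cball x \<rho>) \<le> e * emeasure \<mu> (cball x (5 * \<rho>))"
  shows "(\<integral>\<^sup>+ z. ennreal (g (norm (x - z))) * indicator (ball x \<delta>) z \<partial>\<nu>)
     \<le> e * (\<integral>\<^sup>+ z. ennreal (g (norm (x - z) / 5)) \<partial>\<mu>)"
proof -
  interpret \<mu>: finite_measure \<mu> by fact
  interpret \<nu>: finite_measure \<nu> by fact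
  have [measurable]: "g \<in> borel_measurable borel" using g_cont by (rule borel_measurable_continuous_onI)
  have "(\<integral>\<^sup>+ z. ennreal (g (norm (x - z))) * indicator (ball x \<delta>) z \<partial>\<nu>)
      = (\<integral>\<^sup>+ t. emeasure \<nu> {z \<in> space \<nu>. ennreal t \<le> ennreal (g (norm (x - z))) * indicator (ball x \<delta>) z}
             * indicator {0<..} t \<partial>lborel)"
    by (intro nn_integral_layer_cake \<nu>.sigma_finite_measure_axioms) measurable
  also have "\<dots> \<le> (\<integral>\<^sup>+ t. e * (emeasure \<mu> {z \<in> space \<mu>. ennreal t \<le> ennreal (g (norm (x - z) / 5))}
             * indicator {0<..} t) \<partial>lborel)"
    using emeasure_superlevel_le_density[OF \<mu>(1) \<nu>(1) \<delta> _ density]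
    by (intro nn_integral_mono) (auto simp: mult.assoc split: split_indicator)
  also have "\<dots> = e * (\<integral>\<^sup>+ t. emeasure \<mu> {z \<in> space \<mu>. ennreal t \<le> ennreal (g (norm (x - z) / 5))}
             * indicator {0<..} t \<partial>lborel)"
    by (rule nn_integral_cmult) measurable
  also have "\<dots> = e * (\<integral>\<^sup>+ z. ennreal (g (norm (x - z) / 5)) \<partial>\<mu>)"
    by (subst nn_integral_layer_cake[OF \<mu>.sigma_finite_measure_axioms]) measurable
  finally show ?thesis .
qed

end

lemma nn_integral_trunc_ball_le_density:
  fixes x :: "'a::euclidean_space"
  assumes N: "DIM('a) \<ge> 2"
    and \<mu> [measurable_cong]: "sets \<mu> = sets borel" and \<mu>_fin: "finite_measure \<mu>"
    and \<nu> [measurable_cong]: "sets \<nu> = sets borel" and \<nu>_fin: "finite_measure \<nu>"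
    and r: "r > 0" and \<delta>: "\<delta> > 0" and \<epsilon>: "\<epsilon> \<ge> 0"
    and density: "\<And>\<rho>. 0 < \<rho> \<Longrightarrow> \<rho> \<le> \<delta> \<Longrightarrow> emeasure \<nu> (cball x \<rho>) \<le> ennreal \<epsilon> * emeasure \<mu> (cball x (5 * \<rho>))"
  shows "(\<integral>\<^sup>+ z. ennreal (green_radial TYPE('a) (1/2 * max (norm (x - z)) r)) * indicator (ball x \<delta>) z \<partial>\<nu>)
     \<le> ennreal (\<epsilon> * 2^(5 * (DIM('a) - 1)) * (trunc_pot \<mu> 2 x r + green_gap * measure \<mu> (space \<mu>)))"
proof -
  let ?K = "green_radial TYPE('a)" and ?A = "(2::real)^(5 * (DIM('a) - 1))"
  define g where "g s = ?K (1/2 * max s r)" for s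
  have g_cont: "continuous_on UNIV g"
    unfolding g_def using r
    by (intro continuous_on_compose2[OF continuous_on_green_radial, of UNIV "\<lambda>s. 1/2 * max s r"])
      (auto intro!: continuous_intros)
  have g_antimono: "g t \<le> g s" if "0 \<le> s" "s \<le> t" for s t
    unfolding g_def using that r by (intro green_radial_antimono N) auto
  have g_flat: "g s = g 0" if "0 \<le> s" "s \<le> r" for s
    unfolding g_def using that r by simp
  have "(\<integral>\<^sup>+ z. ennreal (g (norm (x - z) / 5)) \<partial>\<mu>)
      \<le> (\<integral>\<^sup>+ z. ennreal (?K (2 / 2^5 * max (norm (x - z)) r)) \<partial>\<mu>)"
    unfolding g_def using r by (intro nn_integral_mono ennreal_leI green_radial_antimono N) auto
  also have "\<dots> = ennreal (trunc_pot \<mu> (2 / 2^5) x r)"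
    using r by (intro ennreal_trunc_pot[symmetric] N \<mu> \<mu>_fin) auto
  also have "\<dots> \<le> ennreal (?A * (trunc_pot \<mu> 2 x r + green_gap * measure \<mu> (space \<mu>)))"
    using r by (intro ennreal_leI trunc_pot_divide_pow2 N \<mu> \<mu>_fin) auto
  finally have scaled: "(\<integral>\<^sup>+ z. ennreal (g (norm (x - z) / 5)) \<partial>\<mu>)
      \<le> ennreal (?A * (trunc_pot \<mu> 2 x r + green_gap * measure \<mu> (space \<mu>)))" .
  have "(\<integral>\<^sup>+ z. ennreal (g (norm (x - z))) * indicator (ball x \<delta>) z \<partial>\<nu>)
      \<le> ennreal \<epsilon> * (\<integral>\<^sup>+ z. ennreal (g (norm (x - z) / 5)) \<partial>\<mu>)"
    by (rule nn_integral_radial_density_le[OF g_cont g_antimono r g_flat \<mu> \<mu>_fin \<nu> \<nu>_fin \<delta> density])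
  also have "\<dots> \<le> ennreal \<epsilon> * ennreal (?A * (trunc_pot \<mu> 2 x r + green_gap * measure \<mu> (space \<mu>)))"
    using scaled by (rule mult_left_mono) simp
  finally show ?thesis
    using \<epsilon> green_gap_pos unfolding g_def by (simp add: ennreal_mult[symmetric] mult.assoc)
qed

lemma trunc_pot_le_density:
  fixes x :: "'a::euclidean_space"
  assumes N: "DIM('a) \<ge> 2"
    and \<mu>: "sets \<mu> = sets borel" and \<mu>_fin: "finite_measure \<mu>"
    and \<nu> [measurable_cong]: "sets \<nu> = sets borel" and \<nu>_fin: "finite_measure \<nu>"
    and r: "r > 0" and \<delta>: "\<delta> > 0" and \<epsilon>: "\<epsilon> \<ge> 0"
    and density: "\<And>\<rho>. 0 < \<rho> \<Longrightarrow> \<rho> \<le> \<delta> \<Longrightarrow> emeasure \<nu> (cball x \<rho>) \<le> ennreal \<epsilon> * emeasure \<mu> (cball x (5 * \<rho>))"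
  shows "trunc_pot \<nu> (1/2) x r
     \<le> \<epsilon> * 2^(5 * (DIM('a) - 1)) * (trunc_pot \<mu> 2 x r + green_gap * measure \<mu> (space \<mu>))
       + green_radial TYPE('a) (\<delta> / 2) * measure \<nu> (space \<nu>)"
proof -
  interpret \<nu>: finite_measure \<nu> by fact
  let ?K = "green_radial TYPE('a)" and ?B = "ball x \<delta>"
  let ?f = "\<lambda>z. ennreal (?K (1/2 * max (norm (x - z)) r))"
  have "(\<integral>\<^sup>+ z. ?f z * indicator (- ?B) z \<partial>\<nu>) \<le> (\<integral>\<^sup>+ z. ennreal (?K (\<delta> / 2)) \<partial>\<nu>)"
  proof (intro nn_integral_mono)
    fix z
    have "?K (1/2 * max (norm (x - z)) r) \<le> ?K (\<delta> / 2)" if "z \<notin> ?B"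
      using that \<delta> by (intro green_radial_antimono N) (auto simp: dist_norm)
    then show "?f z * indicator (- ?B) z \<le> ennreal (?K (\<delta> / 2))"
      by (auto simp: ennreal_leI split: split_indicator)
  qed
  also have "\<dots> = ennreal (?K (\<delta> / 2) * measure \<nu> (space \<nu>))"
    using green_radial_nonneg[OF N] by (simp add: \<nu>.emeasure_eq_measure ennreal_mult)
  finally have outside: "(\<integral>\<^sup>+ z. ?f z * indicator (- ?B) z \<partial>\<nu>) \<le> ennreal (?K (\<delta> / 2) * measure \<nu> (space \<nu>))" .
  have "ennreal (trunc_pot \<nu> (1/2) x r) = (\<integral>\<^sup>+ z. ?f z \<partial>\<nu>)"
    using r by (intro ennreal_trunc_pot N \<nu> \<nu>_fin) auto
  also have "\<dots> = (\<integral>\<^sup>+ z. ?f z * indicator ?B z \<partial>\<nu>) + (\<integral>\<^sup>+ z. ?f z * indicator (- ?B) z \<partial>\<nu>)"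
    by (subst nn_integral_add[symmetric]) (auto intro!: nn_integral_cong split: split_indicator)
  also have "\<dots> \<le> ennreal (\<epsilon> * 2^(5 * (DIM('a) - 1)) * (trunc_pot \<mu> 2 x r + green_gap * measure \<mu> (space \<mu>))
      + ?K (\<delta> / 2) * measure \<nu> (space \<nu>))"
    using nn_integral_trunc_ball_le_density[OF assms] outside \<epsilon> green_gap_pos green_radial_nonneg[OF N]
    by (subst ennreal_plus) (auto intro: add_mono)
  finally show ?thesis
    using \<epsilon> green_gap_pos green_radial_nonneg[OF N] by (subst (asm) ennreal_le_iff) auto
qed

section \<open>Density of a singular measure\<close>

lemma emeasure_UN_countable_le:
  assumes I: "countable I" and X: "\<And>i. i \<in> I \<Longrightarrow> X i \<in> sets M"
  shows "emeasure M (\<Union>(X ` I)) \<le> (\<integral>\<^sup>+ i. emeasure M (X i) \<partial>count_space I)"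
proof -
  have UX: "\<Union>(X ` I) \<in> sets M" using I X by (intro sets.countable_UN'') auto
  have "emeasure M (\<Union>(X ` I)) = (\<integral>\<^sup>+ x. indicator (\<Union>(X ` I)) x \<partial>M)"
    using UX by simp
  also have "\<dots> \<le> (\<integral>\<^sup>+ x. (\<integral>\<^sup>+ i. indicator (X i) x \<partial>count_space I) \<partial>M)"
  proof (intro nn_integral_mono)
    fix x
    show "indicator (\<Union>(X ` I)) x \<le> (\<integral>\<^sup>+ i. indicator (X i) x \<partial>count_space I)"
    proof (cases "x \<in> \<Union>(X ` I)")
      case True
      then obtain j where j: "j \<in> I" "x \<in> X j" by auto
      have "(\<integral>\<^sup>+ i. indicator (X i) x * indicator {j} i \<partial>count_space I) = (\<Sum>i\<in>{j}. indicator (X i) x * indicator {j} i)"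
        using j by (intro nn_integral_count_space') auto
      also have "\<dots> = 1" using j by simp
      finally have "1 = (\<integral>\<^sup>+ i. indicator (X i) x * indicator {j} i \<partial>count_space I)" ..
      also have "\<dots> \<le> (\<integral>\<^sup>+ i. indicator (X i) x \<partial>count_space I)"
        by (intro nn_integral_mono) (auto split: split_indicator)
      finally show ?thesis using True by simp
    qed simp
  qed
  also have "\<dots> = (\<integral>\<^sup>+ i. (\<integral>\<^sup>+ x. indicator (X i) x \<partial>M) \<partial>count_space I)"
    using I X by (intro nn_integral_count_space_nn_integral) auto
  also have "\<dots> = (\<integral>\<^sup>+ i. emeasure M (X i) \<partial>count_space I)"
    using X by (intro nn_integral_cong) auto
  finally show ?thesis .
qed

lemma null_set_if_small_covers:
  assumes "\<And>\<eta>. \<eta> > 0 \<Longrightarrow> \<exists>N \<in> sets M. S \<subseteq> N \<and> emeasure M N \<le> ennreal \<eta>"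
  shows "\<exists>N \<in> null_sets M. S \<subseteq> N"
proof -
  have "\<forall>n::nat. \<exists>N. N \<in> sets M \<and> S \<subseteq> N \<and> emeasure M N \<le> ennreal (1 / Suc n)"
  proof
    fix n :: nat
    show "\<exists>N. N \<in> sets M \<and> S \<subseteq> N \<and> emeasure M N \<le> ennreal (1 / Suc n)"
      using assms[of "1 / Suc n"] by auto
  qed
  then obtain N where N: "\<And>n. N n \<in> sets M" "\<And>n. S \<subseteq> N n" "\<And>n. emeasure M (N n) \<le> ennreal (1 / Suc n)"
    by (metis choice)
  have "emeasure M (\<Inter>n. N n) \<le> 0 + ennreal e" if "e > 0" for e
  proof -
    obtain n :: nat where "1 / Suc n < e" using \<open>e > 0\<close> nat_approx_posE by blast
    have "emeasure M (\<Inter>n. N n) \<le> emeasure M (N n)" using N by (intro emeasure_mono) auto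
    also have "\<dots> \<le> ennreal e" using N(3)[of n] \<open>1 / Suc n < e\<close> by (simp add: order.trans ennreal_leI)
    finally show ?thesis by simp
  qed
  then have "emeasure M (\<Inter>n. N n) \<le> 0" by (rule ennreal_le_epsilon)
  then have "emeasure M (\<Inter>n. N n) = 0" by simp
  then show ?thesis using N by (intro bexI[of _ "\<Inter>n. N n"]) auto
qed

lemma Vitali_emeasure_le:
  fixes \<mu> \<nu> :: "'a::euclidean_space measure"
  assumes \<mu>: "sets \<mu> = sets borel" and \<nu>: "sets \<nu> = sets borel" and U: "U \<in> sets borel"
    and rad: "\<And>x. x \<in> S \<Longrightarrow> 0 < rad x \<and> rad x \<le> 1 \<and> cball x (rad x) \<subseteq> U"
    and small: "\<And>x. x \<in> S \<Longrightarrow> c * emeasure \<mu> (cball x (5 * rad x)) \<le> emeasure \<nu> (cball x (rad x))"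
  shows "\<exists>N \<in> sets \<mu>. S \<subseteq> N \<and> c * emeasure \<mu> N \<le> emeasure \<nu> U"
proof -
  have "S \<subseteq> (\<Union>x\<in>S. cball x (rad x))" using rad by force
  then obtain C where C: "countable C" "C \<subseteq> S"
      "pairwise (\<lambda>i j. disjnt (cball i (rad i)) (cball j (rad j))) C"
      "S \<subseteq> (\<Union>i\<in>C. cball i (5 * rad i))"
    by (rule Vitali_covering_lemma_cballs[where a="\<lambda>x. x" and B=1]) (use rad in blast)+
  have "c * emeasure \<mu> (\<Union>i\<in>C. cball i (5 * rad i))
      \<le> c * (\<integral>\<^sup>+ i. emeasure \<mu> (cball i (5 * rad i)) \<partial>count_space C)"
    using C(1) \<mu> by (intro mult_left_mono emeasure_UN_countable_le) auto
  also have "\<dots> = (\<integral>\<^sup>+ i. c * emeasure \<mu> (cball i (5 * rad i)) \<partial>count_space C)"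
    by (rule nn_integral_cmult[symmetric]) simp
  also have "\<dots> \<le> (\<integral>\<^sup>+ i. emeasure \<nu> (cball i (rad i)) \<partial>count_space C)"
    using C(2) small by (intro nn_integral_mono) auto
  also have "\<dots> = emeasure \<nu> (\<Union>i\<in>C. cball i (rad i))"
    using C(1,3) \<nu> unfolding pairwise_def disjnt_def
    by (intro emeasure_UN_countable[symmetric]) (auto simp: disjoint_family_on_def)
  also have "\<dots> \<le> emeasure \<nu> U"
  proof (rule emeasure_mono)
    show "(\<Union>i\<in>C. cball i (rad i)) \<subseteq> U" using C(2) rad by blast
  qed (use U \<nu> in simp)
  finally have "c * emeasure \<mu> (\<Union>i\<in>C. cball i (5 * rad i)) \<le> emeasure \<nu> U" .
  moreover have "(\<Union>i\<in>C. cball i (5 * rad i)) \<in> sets \<mu>"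
    using C(1) \<mu> by (intro sets.countable_UN'') auto
  ultimately show ?thesis using C(4) by blast
qed

text \<open>Outer regularity gives an open \<open>U \<supseteq> -A\<close> of small \<open>\<nu>\<close>-measure; the bad points lie in \<open>U\<close>
  and have bad balls inside \<open>U\<close>, and Vitali's covering lemma transfers the smallness to \<open>\<mu>\<close>.\<close>
lemma singular_density_small_cover:
  fixes \<mu> \<nu> :: "'a::euclidean_space measure"
  assumes \<mu>: "sets \<mu> = sets borel" and \<nu>: "sets \<nu> = sets borel" "finite_measure \<nu>"
    and A: "A \<in> sets borel" "emeasure \<nu> (UNIV - A) = 0" and \<epsilon>: "\<epsilon> > 0" and \<eta>: "\<eta> > 0"
  shows "\<exists>N \<in> sets \<mu>. {x. x \<notin> A \<and> \<not> (\<forall>\<^sub>F \<rho> in at_right 0.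
            emeasure \<nu> (cball x \<rho>) \<le> ennreal \<epsilon> * emeasure \<mu> (cball x (5 * \<rho>)))} \<subseteq> N
         \<and> emeasure \<mu> N \<le> ennreal \<eta>"
proof -
  interpret \<nu>: finite_measure \<nu> by fact
  define bad where "bad x \<rho> \<longleftrightarrow> \<not> emeasure \<nu> (cball x \<rho>) \<le> ennreal \<epsilon> * emeasure \<mu> (cball x (5 * \<rho>))"
    for x \<rho>
  define Bad where "Bad = {x. x \<notin> A \<and> \<not> (\<forall>\<^sub>F \<rho> in at_right 0. \<not> bad x \<rho>)}"
  have "emeasure \<nu> (UNIV - A) = (INF U \<in> {U. UNIV - A \<subseteq> U \<and> open U}. emeasure \<nu> U)"
    using A \<nu> by (intro outer_regular) (auto simp: \<nu>.emeasure_eq_measure)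
  then have "(INF U \<in> {U. UNIV - A \<subseteq> U \<and> open U}. emeasure \<nu> U) < ennreal (\<epsilon> * \<eta>)"
    using A \<epsilon> \<eta> by simp
  then obtain U where U: "UNIV - A \<subseteq> U" "open U" "emeasure \<nu> U < ennreal (\<epsilon> * \<eta>)"
    by (auto simp: INF_less_iff)
  have "\<forall>x\<in>Bad. \<exists>\<rho>. 0 < \<rho> \<and> \<rho> \<le> 1 \<and> cball x \<rho> \<subseteq> U \<and> bad x \<rho>"
  proof
    fix x assume x: "x \<in> Bad"
    then have "x \<in> U" using U(1) by (auto simp: Bad_def)
    then obtain d where d: "d > 0" "cball x d \<subseteq> U"
      using U(2) open_contains_cball by blast
    obtain \<rho> where "0 < \<rho>" "\<rho> < min d 1" "bad x \<rho>"
      using x d unfolding Bad_def eventually_at_right_field by (auto dest!: spec[of _ "min d 1"])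
    then show "\<exists>\<rho>. 0 < \<rho> \<and> \<rho> \<le> 1 \<and> cball x \<rho> \<subseteq> U \<and> bad x \<rho>"
      using d by (intro exI[of _ \<rho>]) auto
  qed
  then obtain rad where rad: "\<forall>x\<in>Bad. 0 < rad x \<and> rad x \<le> 1 \<and> cball x (rad x) \<subseteq> U \<and> bad x (rad x)"
    by (rule bchoice[elim_format]) blast
  moreover have "ennreal \<epsilon> * emeasure \<mu> (cball x (5 * rad x)) \<le> emeasure \<nu> (cball x (rad x))"
    if "x \<in> Bad" for x
    using rad that by (auto simp: bad_def not_le intro: less_imp_le)
  ultimately obtain N where N: "N \<in> sets \<mu>" "Bad \<subseteq> N" "ennreal \<epsilon> * emeasure \<mu> N \<le> emeasure \<nu> U"
    using Vitali_emeasure_le[OF \<mu> \<nu>(1), of U Bad rad "ennreal \<epsilon>"] U(2) by auto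
  have "emeasure \<mu> N = ennreal (1 / \<epsilon>) * (ennreal \<epsilon> * emeasure \<mu> N)"
    using \<epsilon> by (simp add: mult.assoc[symmetric] ennreal_mult[symmetric])
  also have "\<dots> \<le> ennreal (1 / \<epsilon>) * ennreal (\<epsilon> * \<eta>)"
    using N(3) U(3) by (intro mult_left_mono) auto
  also have "\<dots> = ennreal \<eta>" using \<epsilon> \<eta> by (simp add: ennreal_mult[symmetric])
  finally show ?thesis
    using N(1,2) unfolding Bad_def bad_def not_not by blast
qed

lemma AE_singular_density_le:
  fixes \<mu> \<nu> :: "'a::euclidean_space measure"
  assumes \<mu>: "sets \<mu> = sets borel" and \<nu>: "sets \<nu> = sets borel" "finite_measure \<nu>"
    and A: "A \<in> sets borel" "emeasure \<mu> A = 0" "emeasure \<nu> (UNIV - A) = 0" and \<epsilon>: "\<epsilon> > 0"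
  shows "AE x in \<mu>. \<forall>\<^sub>F \<rho> in at_right 0.
           emeasure \<nu> (cball x \<rho>) \<le> ennreal \<epsilon> * emeasure \<mu> (cball x (5 * \<rho>))"
    (is "AE x in \<mu>. ?P x")
proof -
  have "\<exists>N \<in> sets \<mu>. {x. x \<notin> A \<and> \<not> ?P x} \<subseteq> N \<and> emeasure \<mu> N \<le> ennreal \<eta>" if "\<eta> > 0" for \<eta>
    by (rule singular_density_small_cover[OF \<mu> \<nu> A(1,3) \<epsilon> that])
  then obtain N where N: "N \<in> null_sets \<mu>" "{x. x \<notin> A \<and> \<not> ?P x} \<subseteq> N"
    using null_set_if_small_covers[of \<mu> "{x. x \<notin> A \<and> \<not> ?P x}"] by blast
  have "A \<union> N \<in> null_sets \<mu>" using A \<mu> N(1) by (intro null_sets.Un) auto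
  moreover have "{x \<in> space \<mu>. \<not> ?P x} \<subseteq> A \<union> N"
  proof (intro subsetI)
    fix x assume "x \<in> {x \<in> space \<mu>. \<not> ?P x}"
    then have "x \<in> A \<or> x \<in> {x. x \<notin> A \<and> \<not> ?P x}" by simp
    then show "x \<in> A \<union> N" using N(2) by (elim disjE) (auto dest: subsetD)
  qed
  ultimately show ?thesis by (rule AE_I')
qed

lemma AE_singular_density_small:
  fixes \<mu> \<nu> :: "'a::euclidean_space measure"
  assumes \<mu>: "sets \<mu> = sets borel" and \<nu>: "sets \<nu> = sets borel" "finite_measure \<nu>"
    and A: "A \<in> sets borel" "emeasure \<mu> A = 0" "emeasure \<nu> (UNIV - A) = 0"
  shows "AE x in \<mu>. \<forall>\<epsilon>>0. \<forall>\<^sub>F \<rho> in at_right 0.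
           emeasure \<nu> (cball x \<rho>) \<le> ennreal \<epsilon> * emeasure \<mu> (cball x (5 * \<rho>))"
proof -
  have "AE x in \<mu>. \<forall>n::nat. \<forall>\<^sub>F \<rho> in at_right 0.
      emeasure \<nu> (cball x \<rho>) \<le> ennreal (1 / Suc n) * emeasure \<mu> (cball x (5 * \<rho>))"
    unfolding AE_all_countable by (intro allI AE_singular_density_le[OF \<mu> \<nu> A]) simp
  then show ?thesis
  proof (rule eventually_mono, intro allI impI)
    fix x and \<epsilon> :: real
    assume x: "\<forall>n::nat. \<forall>\<^sub>F \<rho> in at_right 0.
      emeasure \<nu> (cball x \<rho>) \<le> ennreal (1 / Suc n) * emeasure \<mu> (cball x (5 * \<rho>))"
      and "\<epsilon> > 0"
    then obtain n :: nat where "1 / Suc n < \<epsilon>" using nat_approx_posE by blast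
    then have mono: "ennreal (1 / Suc n) * m \<le> ennreal \<epsilon> * m" for m
      by (intro mult_right_mono ennreal_leI) auto
    have "\<forall>\<^sub>F \<rho> in at_right 0.
        emeasure \<nu> (cball x \<rho>) \<le> ennreal (1 / Suc n) * emeasure \<mu> (cball x (5 * \<rho>))"
      using x by blast
    then show "\<forall>\<^sub>F \<rho> in at_right 0.
        emeasure \<nu> (cball x \<rho>) \<le> ennreal \<epsilon> * emeasure \<mu> (cball x (5 * \<rho>))"
      by (rule eventually_mono) (rule order.trans[OF _ mono])
  qed
qed

section \<open>The ratio of the ball averages\<close>

lemma tendsto_divide_zero_by_comparison:
  fixes f g h :: "'b \<Rightarrow> real"
  assumes h: "filterlim h at_top F"
    and g: "\<forall>\<^sub>F t in F. h t - c \<le> g t"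
    and f_lower: "\<forall>\<^sub>F t in F. - b \<le> f t"
    and f_upper: "\<And>\<epsilon>. \<epsilon> > 0 \<Longrightarrow> \<exists>B. \<forall>\<^sub>F t in F. f t \<le> \<epsilon> * h t + B"
  shows "((\<lambda>t. f t / g t) \<longlongrightarrow> 0) F"
proof (rule tendsto_iff[THEN iffD2], intro allI impI)
  fix \<eta> :: real assume \<eta>: "\<eta> > 0"
  obtain B where B: "\<forall>\<^sub>F t in F. f t \<le> \<eta> / 2 * h t + B" using f_upper \<eta> by (meson half_gt_zero)
  define H where "H = max (c + 1) (max (2 * (B + \<eta> * c) / \<eta> + 1) (c + b / \<eta> + 1))"
  have "\<forall>\<^sub>F t in F. H \<le> h t" using h by (simp add: filterlim_at_top)
  then show "\<forall>\<^sub>F t in F. dist (f t / g t) 0 < \<eta>"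
    using g f_lower B
  proof eventually_elim
    case (elim t)
    have g_pos: "g t \<ge> 1" and gh: "\<eta> * (h t - c) \<le> \<eta> * g t"
      using elim \<eta> by (auto simp: H_def)
    have "2 * (B + \<eta> * c) < \<eta> * h t" and "b < \<eta> * (h t - c)"
      using elim \<eta> by (auto simp: H_def field_simps)
    then have "f t < \<eta> * g t" "- f t < \<eta> * g t"
      using elim gh by (auto simp: algebra_simps)
    then show ?case using g_pos by (simp add: abs_less_iff divide_less_eq)
  qed
qed

lemma ball_avg_Gpot_le_density:
  fixes x :: "'a::euclidean_space"
  assumes N: "DIM('a) \<ge> 2"
    and \<mu>: "sets \<mu> = sets borel" "finite_measure \<mu>" and \<nu>: "sets \<nu> = sets borel" "finite_measure \<nu>"
    and \<epsilon>: "\<epsilon> > 0"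
    and density: "\<forall>\<^sub>F \<rho> in at_right 0. emeasure \<nu> (cball x \<rho>)
                    \<le> ennreal (\<epsilon> / (6^DIM('a) * 2^(5 * (DIM('a) - 1)))) * emeasure \<mu> (cball x (5 * \<rho>))"
  shows "\<exists>B. \<forall>\<^sub>F r in at_right 0. ball_avg (Gpot \<nu>) x r \<le> \<epsilon> * trunc_pot \<mu> 2 x r + B"
proof -
  let ?K = "green_radial TYPE('a)" and ?C = "(6::real)^DIM('a)" and ?A = "(2::real)^(5 * (DIM('a) - 1))"
  define e where "e = \<epsilon> / (?C * ?A)"
  have e: "e \<ge> 0" using \<epsilon> by (simp add: e_def)
  obtain d where d: "d > 0" "\<And>\<rho>. 0 < \<rho> \<Longrightarrow> \<rho> < d \<Longrightarrow>
      emeasure \<nu> (cball x \<rho>) \<le> ennreal e * emeasure \<mu> (cball x (5 * \<rho>))"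
    using density unfolding eventually_at_right_field e_def by force
  define B where "B = \<epsilon> * green_gap * measure \<mu> (space \<mu>)
    + ?C * (?K (d / 4) * measure \<nu> (space \<nu>) + green_gap * measure \<nu> (space \<nu>))"
  have "ball_avg (Gpot \<nu>) x r \<le> \<epsilon> * trunc_pot \<mu> 2 x r + B" if r: "r > 0" for r
  proof -
    have "trunc_pot \<nu> (1/2) x r
        \<le> e * ?A * (trunc_pot \<mu> 2 x r + green_gap * measure \<mu> (space \<mu>))
          + ?K (d / 2 / 2) * measure \<nu> (space \<nu>)"
      using d e r by (intro trunc_pot_le_density N \<mu> \<nu>) auto
    then have "?C * (trunc_pot \<nu> (1/2) x r + green_gap * measure \<nu> (space \<nu>))
        \<le> ?C * (e * ?A * (trunc_pot \<mu> 2 x r + green_gap * measure \<mu> (space \<mu>))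
          + ?K (d / 4) * measure \<nu> (space \<nu>) + green_gap * measure \<nu> (space \<nu>))"
      by (intro mult_left_mono) auto
    also have "\<dots> = \<epsilon> * trunc_pot \<mu> 2 x r + B"
      unfolding e_def B_def by (simp add: field_simps)
    finally show ?thesis using ball_avg_Gpot_le[OF N \<nu> r, of x] by linarith
  qed
  then show ?thesis
    unfolding eventually_at_right_field by (intro exI[of _ B] exI[of _ 1]) auto
qed

lemma ball_avg_Gpot_divide_tendsto_zero:
  fixes x :: "'a::euclidean_space"
  assumes N: "DIM('a) \<ge> 2"
    and \<mu>: "sets \<mu> = sets borel" "finite_measure \<mu>" and \<nu>: "sets \<nu> = sets borel" "finite_measure \<nu>"
    and R: "AE z in \<mu>. norm z \<le> R" "AE z in \<nu>. norm z \<le> R" "0 \<le> R"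
    and G: "Gpot \<mu> x = \<infinity>"
    and density: "\<forall>\<epsilon>>0. \<forall>\<^sub>F \<rho> in at_right 0.
                    emeasure \<nu> (cball x \<rho>) \<le> ennreal \<epsilon> * emeasure \<mu> (cball x (5 * \<rho>))"
  shows "((\<lambda>r. ball_avg (Gpot \<nu>) x r / ball_avg (Gpot \<mu>) x r) \<longlongrightarrow> 0) (at_right 0)"
proof (rule tendsto_divide_zero_by_comparison)
  have small_r: "\<forall>\<^sub>F r in at_right 0. 0 < r \<and> r \<le> (1::real)"
    unfolding eventually_at_right_field by (intro exI[of _ 1]) auto
  show "filterlim (trunc_pot \<mu> 2 x) at_top (at_right 0)"
    by (intro trunc_pot_tendsto_top N \<mu> G) simp
  show "\<forall>\<^sub>F r in at_right 0. trunc_pot \<mu> 2 x r - (norm x + 1 + R) * measure \<mu> (space \<mu>) \<le> ball_avg (Gpot \<mu>) x r"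
    using small_r by eventually_elim (intro ball_avg_Gpot_ge N \<mu> R(1,3); simp)
  show "\<forall>\<^sub>F r in at_right 0. - ((norm x + 1 + R) * measure \<nu> (space \<nu>)) \<le> ball_avg (Gpot \<nu>) x r"
    using small_r
  proof eventually_elim
    case (elim r)
    then show ?case
      using ball_avg_Gpot_ge[OF N \<nu> R(2,3), of r x] trunc_pot_nonneg[of \<nu> 2 x r] by linarith
  qed
  show "\<exists>B. \<forall>\<^sub>F r in at_right 0. ball_avg (Gpot \<nu>) x r \<le> \<epsilon> * trunc_pot \<mu> 2 x r + B" if "\<epsilon> > 0" for \<epsilon>
    using that density by (intro ball_avg_Gpot_le_density N \<mu> \<nu>) auto
qed

theorem lemma3p3:
  fixes \<Omega> :: "'a::euclidean_space set" and \<mu> \<nu> :: "'a measure"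
  assumes "DIM('a) \<ge> 2"
    and "open \<Omega>" and "bounded \<Omega>"
    and "sets \<mu> = sets borel" and "finite_measure \<mu>" and "emeasure \<mu> (UNIV - \<Omega>) = 0"
    and "sets \<nu> = sets borel" and "finite_measure \<nu>" and "emeasure \<nu> (UNIV - \<Omega>) = 0"
    and "\<exists>A \<in> sets borel. emeasure \<mu> A = 0 \<and> emeasure \<nu> (UNIV - A) = 0"
  shows "AE x in \<mu>. x \<in> {x \<in> \<Omega>. Gpot \<mu> x = \<infinity> \<and> Gpot \<nu> x = \<infinity>} \<longrightarrow>
           ((\<lambda>r. ball_avg (Gpot \<nu>) x r / ball_avg (Gpot \<mu>) x r) \<longlongrightarrow> 0) (at_right 0)"
proof -
  obtain A where A: "A \<in> sets borel" "emeasure \<mu> A = 0" "emeasure \<nu> (UNIV - A) = 0"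
    using assms(10) by blast
  obtain R where R: "0 \<le> R" "\<And>z. z \<in> \<Omega> \<Longrightarrow> norm z \<le> R"
    using \<open>bounded \<Omega>\<close> unfolding bounded_iff by (meson linear order.trans)
  have supported: "AE z in M. norm z \<le> R" if "sets M = sets borel" "emeasure M (UNIV - \<Omega>) = 0" for M
    using that \<open>open \<Omega>\<close> R(2) by (intro AE_I'[of "UNIV - \<Omega>"]) auto
  have "AE x in \<mu>. \<forall>\<epsilon>>0. \<forall>\<^sub>F \<rho> in at_right 0.
      emeasure \<nu> (cball x \<rho>) \<le> ennreal \<epsilon> * emeasure \<mu> (cball x (5 * \<rho>))"
    by (rule AE_singular_density_small[OF assms(4,7,8) A])
  then show ?thesis
    by (rule eventually_mono)
      (auto intro!: ball_avg_Gpot_divide_tendsto_zero assms(1,4,5,7,8) supported assms(6,9) R(1))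
qed

end
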